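(* Let $M\ge1$, $\mathbf a\in\mathcal A_M$ and $\mathbf b\in\mathcal A_1$. Then \[ \Phi_{\mathbf a\circ\mathbf b}=\Phi_{\mathbf b}\circ\Phi_{\mathbf a}|_{X_{\mathbf a\circ\mathbf b}},\qquad \hat\Phi_{\mathbf a\circ\mathbf b}=\hat\Phi_{\mathbf b}\circ\hat\Phi_{\mathbf a}|_{\alpha^{-1}(X_{\mathbf a\circ\mathbf b})}, \] and consequently \[ \Phi_{\mathbf a\circ\mathbf b}^{-1}=\Phi_{\mathbf a}^{-1}\circ\Phi_{\mathbf b}^{-1},\qquad \hat\Phi_{\mathbf a\circ\mathbf b}^{-1}=\hat\Phi_{\mathbf a}^{-1}\circ\hat\Phi_{\mathbf b}^{-1}. \]
   Context: Sequences. $\Omega_M=\{0,\dots,M\}^{\mathbb N}$, ordered lexicographically; words are compared via $\mathbf c\prec\mathbf d$ iff $\mathbf c0^\infty\prec\mathbf d0^\infty$. Word operations. For a word $c_1\dots c_k$: - if $c_k<M$, then $c_1\dots c_k^+=c_1\dots c_{k-1}(c_k+1)$; - the reflection is $\overline{c_1\dots c_k}=(M-c_1)\dots(M-c_k)$, and likewise $\overline{(c_i)}=(M-c_i)$ for sequences. Quasi-greedy expansion. For $q\in(1,M+1]$, $\alpha(q)$ is the lexicographically largest sequence $(a_i)\in\Omega_M$ not ending in $0^\infty$ with $\sum a_iq^{-i}=1$. $\alpha^*$ denotes this map for $M=1$. The set $\mathcal V$. Let $\mathbf V=\{(c_i)\in\Omega_M:\overline{(c_i)}\preceq\sigma^n((c_i))\preceq(c_i)\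 \forall n\ge0\}$ and $\mathcal V=\{q\in(1,M+1]:\alpha(q)\in\mathbf V\}$. $\mathcal V^*$ denotes $\mathcal V$ for $M=1$. Fundamental words. A word $a_1\dots a_m$ ($m\ge2$) is fundamental if $\overline{a_1\dots a_{m-i}}\preceq a_{i+1}\dots a_m\prec a_1\dots a_{m-i}$ for $1\le i<m$. When $M\ge2$, a letter $a_1$ is fundamental if $M-a_1\le a_1<M$. $\mathcal A_M$ is the set of fundamental words, and $\mathcal A_1$ is this set for $M=1$; all its words begin with $1$. For $\mathbf a\in\mathcal A_M$, $q_L(\mathbf a),q_R(\mathbf a)$ are defined by $\alpha(q_L(\mathbf a))=\mathbf a^\infty$ and $\alpha(q_R(\mathbf a))=\mathbf a^+(\overline{\mathbf a})^\infty$. The graph. For $\mathbf a\in\mathcal A_M$, let $G$ have vertices Start, $A$, $B$ and edges - $e_0$: Start$\to A$, - $e_1$: $A\to B$, - $e_2$: $B\to B$, - $e_3$: $B\to A$, - $e_4$: $A\to A$. It carries two labelings: - $\mathcal L_{\mathbf a}$: $e_0,e_3\mapsto\mathbf a^+$; $e_1\mapsto\overline{\mathbf a^+}$; $e_2\mapsto\mathbf a$; $e_4\mapsto\overline{\mathbf a}$; - $\mathcal L^*$: $e_0,e_3,e_4\mapsto1$; $e_1,e_2\mapsto0$. $X_{\mathbf a}$ is the set of concatenations of $\mathcal L_{\mathbf a}$-labels along infinite paths starting with $e_0$. Let $X^*=\{x\in\{0,1\}^{\mathbb N}:x_1=1\}$. The maps $\Phi_{\mathbf a}$ and $\hat\Phi_{\mathbf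 a}$. - $\Phi_{\mathbf a}:X_{\mathbf a}\to X^*$ replaces each $\mathcal L_{\mathbf a}$-label on the (unique) path by its $\mathcal L^*$-label. It is a strictly increasing bijection. - The same rule defines $\Phi_{\mathbf a}$ on finite block words along paths starting with $e_0$ or with $e_1$. When $\mathbf a\ne\overline{\mathbf a}$, it also applies along paths starting with $e_2$ or $e_4$. - For $q\in(q_L(\mathbf a),q_R(\mathbf a)]\cap\mathcal V$ one has $\alpha(q)\in X_{\mathbf a}$. Define $\hat\Phi_{\mathbf a}(q):=(\alpha^* )^{-1}(\Phi_{\mathbf a}(\alpha(q)))\in\mathcal V^*$. Composition. For $\mathbf b\in\mathcal A_1$, $\mathbf a\circ\mathbf b:=\Phi_{\mathbf a}^{-1}(\mathbf b)$, the unique block word along a path from Start whose image under $\Phi_{\mathbf a}$ is $\mathbf b$. It belongs to $\mathcal A_M$. *)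

theory Defs
  imports Complex_Main
begin

text \<open>Sequences in Omega_M are functions nat => nat, index 0 standing for the paper's index 1.
Words are nat lists.\<close>

definition Omega :: "nat \<Rightarrow> (nat \<Rightarrow> nat) set" where
  "Omega M = {x. \<forall>i. x i \<le> M}"

definition lex_less :: "(nat \<Rightarrow> nat) \<Rightarrow> (nat \<Rightarrow> nat) \<Rightarrow> bool" where
  "lex_less x y \<longleftrightarrow> (\<exists>n. (\<forall>i<n. x i = y i) \<and> x n < y n)"

definition lex_le :: "(nat \<Rightarrow> nat) \<Rightarrow> (nat \<Rightarrow> nat) \<Rightarrow> bool" where
  "lex_le x y \<longleftrightarrow> x = y \<or> lex_less x y"

definition pad0 :: "nat list \<Rightarrow> nat \<Rightarrow> nat" where
  "pad0 w = (\<lambda>i. if i < length w then w ! i else 0)"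

definition wless :: "nat list \<Rightarrow> nat list \<Rightarrow> bool" where
  "wless c d \<longleftrightarrow> lex_less (pad0 c) (pad0 d)"

definition wle :: "nat list \<Rightarrow> nat list \<Rightarrow> bool" where
  "wle c d \<longleftrightarrow> lex_le (pad0 c) (pad0 d)"

definition wplus :: "nat list \<Rightarrow> nat list" where
  "wplus w = butlast w @ [last w + 1]"

definition wrefl :: "nat \<Rightarrow> nat list \<Rightarrow> nat list" where
  "wrefl M w = map (\<lambda>c. M - c) w"

definition srefl :: "nat \<Rightarrow> (nat \<Rightarrow> nat) \<Rightarrow> (nat \<Rightarrow> nat)" where
  "srefl M x = (\<lambda>i. M - x i)"

definition shift :: "nat \<Rightarrow> (nat \<Rightarrow> nat) \<Rightarrow> (nat \<Rightarrow> nat)" where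
  "shift n x = (\<lambda>i. x (i + n))"

definition per :: "nat list \<Rightarrow> nat \<Rightarrow> nat" where
  "per w = (\<lambda>i. w ! (i mod length w))"

definition pre_per :: "nat list \<Rightarrow> nat list \<Rightarrow> nat \<Rightarrow> nat" where
  "pre_per u w = (\<lambda>i. if i < length u then u ! i else per w (i - length u))"

definition qg_cands :: "nat \<Rightarrow> real \<Rightarrow> (nat \<Rightarrow> nat) set" where
  "qg_cands M q = {a. a \<in> Omega M \<and> (\<forall>N. \<exists>n\<ge>N. a n \<noteq> 0)
                       \<and> (\<lambda>i. real (a i) / q ^ Suc i) sums 1}"

definition alpha :: "nat \<Rightarrow> real \<Rightarrow> nat \<Rightarrow> nat" where
  "alpha M q = (THE a. a \<in> qg_cands M q \<and> (\<forall>b \<in> qg_cands M q. lex_le b a))"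

definition Vseq :: "nat \<Rightarrow> (nat \<Rightarrow> nat) set" where
  "Vseq M = {c \<in> Omega M. \<forall>n. lex_le (srefl M c) (shift n c) \<and> lex_le (shift n c) c}"

definition Vset :: "nat \<Rightarrow> real set" where
  "Vset M = {q. 1 < q \<and> q \<le> real M + 1 \<and> alpha M q \<in> Vseq M}"

definition Fund :: "nat \<Rightarrow> nat list set" where
  "Fund M = {a. set a \<subseteq> {0..M} \<and>
     ((length a \<ge> 2 \<and> (\<forall>i. 1 \<le> i \<and> i < length a \<longrightarrow>
          wle (wrefl M (take (length a - i) a)) (drop i a)
        \<and> wless (drop i a) (take (length a - i) a)))
      \<or> (M \<ge> 2 \<and> length a = 1 \<and> M - hd a \<le> hd a \<and> hd a < M))}"

definition qL :: "nat \<Rightarrow> nat list \<Rightarrow> real" where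
  "qL M a = (THE q. 1 < q \<and> q \<le> real M + 1 \<and> alpha M q = per a)"

definition qR :: "nat \<Rightarrow> nat list \<Rightarrow> real" where
  "qR M a = (THE q. 1 < q \<and> q \<le> real M + 1 \<and> alpha M q = pre_per (wplus a) (wrefl M a))"

datatype vtx = Start | VA | VB
datatype edge = E0 | E1 | E2 | E3 | E4

fun src :: "edge \<Rightarrow> vtx" where
  "src E0 = Start" | "src E1 = VA" | "src E2 = VB" | "src E3 = VB" | "src E4 = VA"

fun tgt :: "edge \<Rightarrow> vtx" where
  "tgt E0 = VA" | "tgt E1 = VB" | "tgt E2 = VB" | "tgt E3 = VA" | "tgt E4 = VA"

fun lab :: "nat \<Rightarrow> nat list \<Rightarrow> edge \<Rightarrow> nat list" where
  "lab M a E0 = wplus a"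
| "lab M a E3 = wplus a"
| "lab M a E1 = wrefl M (wplus a)"
| "lab M a E2 = a"
| "lab M a E4 = wrefl M a"

fun labstar :: "edge \<Rightarrow> nat list" where
  "labstar E0 = [1]" | "labstar E3 = [1]" | "labstar E4 = [1]"
| "labstar E1 = [0]" | "labstar E2 = [0]"

definition ipath :: "(nat \<Rightarrow> edge) \<Rightarrow> bool" where
  "ipath p \<longleftrightarrow> p 0 = E0 \<and> (\<forall>n. tgt (p n) = src (p (Suc n)))"

definition fpath :: "edge list \<Rightarrow> bool" where
  "fpath p \<longleftrightarrow> p \<noteq> [] \<and> hd p = E0 \<and> (\<forall>n. Suc n < length p \<longrightarrow> tgt (p ! n) = src (p ! Suc n))"

text \<open>concatenation of an infinite sequence of nonempty words\<close>
definition concat_inf :: "(nat \<Rightarrow> nat list) \<Rightarrow> nat \<Rightarrow> nat" where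
  "concat_inf w = (\<lambda>n. concat (map w [0..<Suc n]) ! n)"

definition X :: "nat \<Rightarrow> nat list \<Rightarrow> (nat \<Rightarrow> nat) set" where
  "X M a = {concat_inf (lab M a \<circ> p) | p. ipath p}"

definition Xstar :: "(nat \<Rightarrow> nat) set" where
  "Xstar = {x. x \<in> Omega 1 \<and> x 0 = 1}"

definition Phi :: "nat \<Rightarrow> nat list \<Rightarrow> (nat \<Rightarrow> nat) \<Rightarrow> (nat \<Rightarrow> nat)" where
  "Phi M a x = (THE y. \<exists>p. ipath p \<and> x = concat_inf (lab M a \<circ> p) \<and> y = concat_inf (labstar \<circ> p))"

definition Dom :: "nat \<Rightarrow> nat list \<Rightarrow> real set" where
  "Dom M a = {q. qL M a < q \<and> q \<le> qR M a} \<inter> Vset M"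

definition Phihat :: "nat \<Rightarrow> nat list \<Rightarrow> real \<Rightarrow> real" where
  "Phihat M a q = (THE p. 1 < p \<and> p \<le> 2 \<and> alpha 1 p = Phi M a (alpha M q))"

text \<open>a o b = Phi_a^{-1}(b) on finite block words along a path from Start\<close>
definition comp :: "nat \<Rightarrow> nat list \<Rightarrow> nat list \<Rightarrow> nat list" where
  "comp M a b = (THE w. \<exists>p. fpath p \<and> w = concat (map (lab M a) p) \<and> b = concat (map labstar p))"

end

theory Submission
  imports Defs
begin

text \<open>Inverting $\Phi_c$ is a block substitution: the bit sequence $y$ of a path in $G$ is
  replaced by the $\mathcal L_c$-labels of its edges. Substituting
  first with $b$ and then with $a$ is the same as substituting with $a \circ b$, because
  $a \circ b$ is itself the image of $b$; this gives the statements about $\Phi$. For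
  $\hat\Phi$ one needs that $\alpha$ maps $(q_L(c), q_R(c)] \cap \mathcal V$ into
  $\Phi_c^{-1}(\mathbf V)$ -- a sequence of $\mathbf V$ lying between $c^\infty$ and
  $c^+\overline c^\infty$ must be read along a path of $G$ -- and that sequences of $\mathbf V$
  are quasi-greedy expansions (Parry's criterion).\<close>


section \<open>Lexicographic order on sequences\<close>

lemma lex_less_irrefl [simp]: "\<not> lex_less x x"
  by (auto simp: lex_less_def)

lemma lex_less_trans: "lex_less x y \<Longrightarrow> lex_less y z \<Longrightarrow> lex_less x z"
  unfolding lex_less_def
proof (elim exE conjE)
  fix n1 n2 assume a1: "\<forall>i<n1. x i = y i" "x n1 < y n1" and a2: "\<forall>i<n2. y i = z i" "y n2 < z n2"
  show "\<exists>n. (\<forall>i<n. x i = z i) \<and> x n < z n"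
  proof (cases "n1 < n2")
    case True then show ?thesis using a1 a2 by (intro exI[of _ n1]) auto
  next
    case False then show ?thesis using a1 a2
      by (intro exI[of _ n2]) (auto simp: not_less order_le_less)
  qed
qed

lemma lex_less_linear: "x = y \<or> lex_less x y \<or> lex_less y x"
proof (cases "x = y")
  case False
  then obtain k where "x k \<noteq> y k" by auto
  define n where "n = (LEAST n. x n \<noteq> y n)"
  have n1: "x n \<noteq> y n" unfolding n_def by (rule LeastI[of _ k]) fact
  have n2: "\<forall>i<n. x i = y i" unfolding n_def using not_less_Least by blast
  show ?thesis using n1 n2 unfolding lex_less_def
    by (cases "x n < y n") (auto intro!: exI[of _ n] simp: not_less order_le_less)
qed simp

lemma lex_less_asym: "lex_less x y \<Longrightarrow> \<not> lex_less y x"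
  using lex_less_trans lex_less_irrefl by blast

lemma lex_le_refl [simp]: "lex_le x x"
  by (simp add: lex_le_def)

lemma lex_le_trans: "lex_le x y \<Longrightarrow> lex_le y z \<Longrightarrow> lex_le x z"
  unfolding lex_le_def using lex_less_trans by blast

lemma lex_le_antisym: "lex_le x y \<Longrightarrow> lex_le y x \<Longrightarrow> x = y"
  unfolding lex_le_def using lex_less_asym by blast

lemma not_lex_less_iff: "\<not> lex_less x y \<longleftrightarrow> lex_le y x"
  unfolding lex_le_def using lex_less_linear lex_less_asym lex_less_irrefl by metis

lemma not_lex_le_iff: "\<not> lex_le x y \<longleftrightarrow> lex_less y x"
  using not_lex_less_iff by metis

lemma lex_less_imp_le: "lex_less x y \<Longrightarrow> lex_le x y"
  by (simp add: lex_le_def)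

lemma srefl_srefl: "x \<in> Omega M \<Longrightarrow> srefl M (srefl M x) = x"
  by (auto simp: srefl_def Omega_def fun_eq_iff)

lemma srefl_Omega: "srefl M x \<in> Omega M" by (auto simp: srefl_def Omega_def)

lemma lex_less_srefl:
  assumes "x \<in> Omega M" "x' \<in> Omega M" "lex_less x x'"
  shows "lex_less (srefl M x') (srefl M x)"
proof -
  obtain n where n: "\<forall>i<n. x i = x' i" "x n < x' n" using assms(3) unfolding lex_less_def by auto
  have "x' n \<le> M" using assms(2) by (auto simp: Omega_def)
  then show ?thesis unfolding lex_less_def srefl_def using n by (intro exI[of _ n]) auto
qed

lemma lex_le_srefl:
  "x \<in> Omega M \<Longrightarrow> x' \<in> Omega M \<Longrightarrow>
    lex_le x x' \<Longrightarrow> lex_le (srefl M x') (srefl M x)"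
  using lex_less_srefl by (auto simp: lex_le_def)

lemma lex_le_srefl_iff:
  "x \<in> Omega M \<Longrightarrow> x' \<in> Omega M \<Longrightarrow>
    lex_le (srefl M x') (srefl M x) \<longleftrightarrow> lex_le x x'"
  using lex_le_srefl[of "srefl M x'" M "srefl M x"] lex_le_srefl[of x M x']
  by (auto simp: srefl_srefl srefl_Omega)

lemma lex_le_shift_common_prefix:
  assumes "lex_le x x'" "\<forall>j<l. x j = x' j"
  shows "lex_le (shift l x) (shift l x')"
proof (cases "x = x'")
  case False
  then obtain n where n: "\<forall>i<n. x i = x' i"
    "x n < x' n" using assms(1) by (auto simp: lex_le_def lex_less_def)
  have "l \<le> n" using n assms(2) by (metis less_irrefl not_le)
  then show ?thesis unfolding lex_le_def lex_less_def shift_def using n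
    by (intro disjI2 exI[of _ "n - l"]) auto
qed simp


section \<open>Expansions in base $q$\<close>

definition qval :: "real \<Rightarrow> (nat \<Rightarrow> nat) \<Rightarrow> real" where
  "qval q d = (\<Sum>i. real (d i) / q ^ Suc i)"

definition inf_nonzero :: "(nat \<Rightarrow> nat) \<Rightarrow> bool" where
  "inf_nonzero d \<longleftrightarrow> (\<forall>N. \<exists>n\<ge>N. d n \<noteq> 0)"

lemma summable_qval:
  assumes "d \<in> Omega M" "1 < q"
  shows "summable (\<lambda>i. real (d i) / q ^ Suc i)"
proof (rule summable_comparison_test')
  show "summable (\<lambda>i. (real M / q) * (1/q)^i)"
    using assms by (intro summable_mult summable_geometric) auto
  fix n
  have "d n \<le> M" using assms by (auto simp: Omega_def)
  then show "norm (real (d n) / q ^ Suc n) \<le> real M / q * (1 / q) ^ n"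
    using assms by (auto simp: power_divide divide_right_mono field_simps)
qed

lemma shift_Omega: "d \<in> Omega M \<Longrightarrow> shift k d \<in> Omega M"
  by (auto simp: Omega_def shift_def)

lemma shift_inf_nonzero: "inf_nonzero d \<Longrightarrow> inf_nonzero (shift k d)"
  unfolding inf_nonzero_def shift_def
proof (intro allI)
  fix N assume "\<forall>N. \<exists>n\<ge>N. d n \<noteq> 0"
  then obtain n where "n \<ge> N + k" "d n \<noteq> 0" by blast
  then show "\<exists>n\<ge>N. d (n + k) \<noteq> 0" by (intro exI[of _ "n - k"]) auto
qed

lemma shift_shift[simp]: "shift a (shift b d) = shift (a + b) d"
  by (auto simp: shift_def add.assoc add.commute add.left_commute)

lemma shift_0[simp]: "shift 0 d = d" by (simp add: shift_def)

lemma lex_le_shift_ones: "lex_le (shift n (\<lambda>_. 1)) (\<lambda>_. 1)"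
  by (simp add: shift_def)

lemma qval_split:
  assumes "d \<in> Omega M" "1 < q"
  shows "qval q d = (\<Sum>i<k. real (d i) / q ^ Suc i) + qval q (shift k d) / q ^ k"
proof -
  have s: "summable (\<lambda>i. real (d i) / q ^ Suc i)" by (rule summable_qval[OF assms])
  have "qval q d = (\<Sum>n. real (d (n + k)) / q ^ Suc (n + k)) + (\<Sum>i<k. real (d i) / q ^ Suc i)"
    unfolding qval_def by (rule suminf_split_initial_segment[OF s])
  moreover have "(\<Sum>n. real (d (n + k)) / q ^ Suc (n + k)) = qval q (shift k d) / q ^ k"
  proof -
    have "(\<Sum>n. real (d (n + k)) / q ^ Suc (n + k)) = (\<Sum>n. real (shift k d n) / q ^ Suc n / q ^ k)"
      by (simp add: shift_def power_add field_simps)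
    also have "\<dots> = qval q (shift k d) / q ^ k"
      unfolding qval_def by (rule suminf_divide[OF summable_qval[OF shift_Omega[OF assms(1)] assms(2)]])
    finally show ?thesis .
  qed
  ultimately show ?thesis by simp
qed

lemma qval_pos: assumes "d \<in> Omega M" "1 < q" "inf_nonzero d" shows "0 < qval q d"
proof -
  obtain n where "d n \<noteq> 0" using assms(3) unfolding inf_nonzero_def by blast
  then show ?thesis unfolding qval_def using assms
    by (intro suminf_pos2[OF summable_qval[OF assms(1,2)], of n]) auto
qed

lemma qval_le: assumes "d \<in> Omega M" "1 < q" shows "qval q d \<le> real M / (q - 1)"
proof -
  have "qval q d \<le> (\<Sum>i. (real M / q) * (1/q)^i)"
    unfolding qval_def
  proof (rule suminf_le[OF _ summable_qval[OF assms]])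
    show "summable (\<lambda>i. (real M / q) * (1/q)^i)"
      using assms by (intro summable_mult summable_geometric) auto
    fix n
    have "d n \<le> M" using assms by (auto simp: Omega_def)
    then show "real (d n) / q ^ Suc n \<le> real M / q * (1 / q) ^ n"
      using assms by (auto simp: power_divide divide_right_mono field_simps)
  qed
  also have "\<dots> = real M / q * (1 / (1 - 1/q))"
    using assms by (subst suminf_mult) (auto intro!: summable_geometric simp: suminf_geometric)
  also have "\<dots> = real M / (q - 1)" using assms by (simp add: field_simps)
  finally show ?thesis .
qed

lemma qval_le_one_at_Mp1: assumes "d \<in> Omega M" shows "qval (real M + 1) d \<le> 1"
proof (cases "M = 0")
  case True
  then have "d = (\<lambda>_. 0)" using assms by (auto simp: Omega_def)
  then show ?thesis by (simp add: qval_def)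
next
  case False
  then show ?thesis using qval_le[OF assms, of "real M + 1"] by simp
qed

text \<open>Taking $\lceil q r\rceil - 1$ rather than $\lfloor q r\rfloor$ as the next digit keeps every
  remainder $r$ positive, so this algorithm produces the quasi-greedy expansion.\<close>

primrec greedy_rem :: "real \<Rightarrow> nat \<Rightarrow> real" where
  "greedy_rem q 0 = 1"
| "greedy_rem q (Suc n) = q * greedy_rem q n - of_int (\<lceil>q * greedy_rem q n\<rceil> - 1)"

definition greedy :: "real \<Rightarrow> nat \<Rightarrow> nat" where
  "greedy q n = nat (\<lceil>q * greedy_rem q n\<rceil> - 1)"

lemma greedy_rem_bounds: "1 < q \<Longrightarrow> 0 < greedy_rem q n \<and> greedy_rem q n \<le> 1"
proof (induction n)
  case (Suc n)
  then have "0 < q * greedy_rem q n" by auto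
  then show ?case by (simp, linarith)
qed simp

lemma greedy_real: assumes "1 < q" shows "real (greedy q n) = of_int (\<lceil>q * greedy_rem q n\<rceil> - 1)"
proof -
  have "0 < q * greedy_rem q n" using greedy_rem_bounds[OF assms] assms by auto
  then have "\<lceil>q * greedy_rem q n\<rceil> \<ge> 1" by linarith
  then show ?thesis unfolding greedy_def by simp
qed

lemma greedy_rem_Suc: "1 < q \<Longrightarrow> greedy_rem q (Suc n) = q * greedy_rem q n - real (greedy q n)"
  by (simp add: greedy_real)

lemma greedy_ceiling: "1 < q \<Longrightarrow> q * greedy_rem q n \<le> real (greedy q n) + 1"
  by (simp add: greedy_real)

lemma greedy_le: assumes "1 < q" "q \<le> real M + 1" shows "greedy q n \<le> M"
proof -
  have "q * greedy_rem q n \<le> q * 1" using greedy_rem_bounds[OF assms(1), of n] assms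
    by (intro mult_left_mono) auto
  then have "q * greedy_rem q n \<le> real M + 1" using assms by linarith
  then have "\<lceil>q * greedy_rem q n\<rceil> \<le> int M + 1" by linarith
  then show ?thesis unfolding greedy_def by simp
qed

lemma greedy_partial_sum: "1 < q \<Longrightarrow>
  (\<Sum>i<n. real (greedy q i) / q ^ Suc i) = 1 - greedy_rem q n / q ^ n"
proof (induction n)
  case (Suc n)
  have "(\<Sum>i<Suc n. real (greedy q i) / q ^ Suc i) = (1 - greedy_rem q n / q^n) + real (greedy q n)/q^Suc n"
    using Suc by simp
  also have "\<dots> = 1 - (q*greedy_rem q n - real (greedy q n))/q^Suc n" using Suc.prems
    by (simp add: field_simps)
  finally show ?case using greedy_rem_Suc[OF Suc.prems] by (simp del: greedy_rem.simps(2))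
qed simp

lemma greedy_Omega: "1 < q \<Longrightarrow> q \<le> real M + 1 \<Longrightarrow> greedy q \<in> Omega M"
  using greedy_le by (auto simp: Omega_def)

lemma qval_greedy: assumes "1 < q" "q \<le> real M + 1" shows "qval q (greedy q) = 1"
proof -
  have "(\<lambda>n. greedy_rem q n / q ^ n) \<longlonglongrightarrow> 0"
  proof (rule real_tendsto_sandwich[of "\<lambda>n. 0" _ _ "\<lambda>n. (1/q)^n"])
    show "\<forall>\<^sub>F n in sequentially. greedy_rem q n / q ^ n \<le> (1 / q) ^ n"
      using greedy_rem_bounds[OF assms(1)] assms by (auto simp: power_divide divide_right_mono)
    show "\<forall>\<^sub>F n in sequentially. 0 \<le> greedy_rem q n / q ^ n"
      using greedy_rem_bounds[OF assms(1)] assms by (auto intro!: always_eventually divide_nonneg_pos less_imp_le)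
    show "(\<lambda>n. (1 / q) ^ n) \<longlonglongrightarrow> 0" using assms by (intro LIMSEQ_power_zero) auto
  qed simp
  then have "(\<lambda>n. 1 - greedy_rem q n / q ^ n) \<longlonglongrightarrow> 1 - 0" by (intro tendsto_intros)
  then have "(\<lambda>i. real (greedy q i) / q ^ Suc i) sums 1"
    unfolding sums_def using greedy_partial_sum[OF assms(1)] by simp
  then show ?thesis unfolding qval_def by (rule sums_unique[symmetric])
qed

lemma greedy_sums: assumes "1 < q" "q \<le> real M + 1" shows "(\<lambda>i. real (greedy q i) / q ^ Suc i) sums 1"
proof -
  have "(\<lambda>i. real (greedy q i) / q ^ Suc i) sums (\<Sum>i. real (greedy q i) / q ^ Suc i)"
    by (rule summable_sums[OF summable_qval[OF greedy_Omega[OF assms] assms(1)]])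
  then show ?thesis using qval_greedy[OF assms] by (simp add: qval_def)
qed

lemma greedy_inf_nonzero: assumes "1 < q" shows "inf_nonzero (greedy q)"
proof (rule ccontr)
  assume "\<not> inf_nonzero (greedy q)"
  then obtain N where N: "\<And>n. n \<ge> N \<Longrightarrow> greedy q n = 0" unfolding inf_nonzero_def by auto
  have e: "greedy_rem q (N + k) = q ^ k * greedy_rem q N" for k
    by (induction k) (auto simp del: greedy_rem.simps(2) simp: greedy_rem_Suc[OF assms] N)
  obtain k where "q ^ k > 1 / greedy_rem q N"
    using real_arch_pow[of q "1 / greedy_rem q N"] assms by auto
  then have "q ^ k * greedy_rem q N > 1" using greedy_rem_bounds[OF assms, of N] by (simp add: field_simps)
  then have "greedy_rem q (N + k) > 1" using e[of k] by linarith
  then show False using greedy_rem_bounds[OF assms, of "N + k"] by simp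
qed

lemma greedy_maximal:
  assumes q: "1 < q" and e: "e \<in> Omega M" "inf_nonzero e" "qval q e \<le> 1"
  shows "lex_le e (greedy q)"
proof (rule ccontr)
  assume "\<not> lex_le e (greedy q)"
  then obtain k where k: "\<forall>i<k. greedy q i = e i" "greedy q k < e k"
    by (auto simp: not_lex_le_iff lex_less_def)
  have "qval q e = (\<Sum>i<Suc k. real (e i) / q ^ Suc i) + qval q (shift (Suc k) e) / q ^ Suc k"
    by (rule qval_split[OF e(1) q])
  also have "(\<Sum>i<Suc k. real (e i) / q ^ Suc i) = (\<Sum>i<k. real (greedy q i) / q ^ Suc i) +
    real (e k) / q ^ Suc k"
    using k(1) by simp
  also have "(\<Sum>i<k. real (greedy q i) / q ^ Suc i) = 1 - greedy_rem q k / q ^ k"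
    by (rule greedy_partial_sum[OF q])
  finally have v: "qval q e = 1 - greedy_rem q k / q ^ k + real (e k) / q ^ Suc k +
    qval q (shift (Suc k) e) / q ^ Suc k" .
  have "real (e k) \<ge> real (greedy q k) + 1" using k(2) by simp
  then have "real (e k) \<ge> q * greedy_rem q k" using greedy_ceiling[OF q, of k] by linarith
  then have "real (e k) / q ^ Suc k \<ge> q * greedy_rem q k / q ^ Suc k" using q by (intro divide_right_mono) auto
  also have "q * greedy_rem q k / q ^ Suc k = greedy_rem q k / q ^ k" using q by simp
  finally have 1: "real (e k) / q ^ Suc k \<ge> greedy_rem q k / q ^ k" .
  have "0 < qval q (shift (Suc k) e)" by (rule qval_pos[OF shift_Omega[OF e(1)] q shift_inf_nonzero[OF e(2)]])
  then have "0 < qval q (shift (Suc k) e) / q ^ Suc k" using q by simp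
  with v 1 e(3) show False by linarith
qed

lemma alpha_eq_greedy: assumes "1 < q" "q \<le> real M + 1" shows "alpha M q = greedy q"
  unfolding alpha_def
proof (rule the_equality)
  show "greedy q \<in> qg_cands M q \<and> (\<forall>b\<in>qg_cands M q. lex_le b (greedy q))"
    using greedy_Omega[OF assms] greedy_inf_nonzero[OF assms(1)] greedy_sums[OF assms] greedy_maximal[OF assms(1)]
    by (auto simp: qg_cands_def inf_nonzero_def qval_def sums_unique[symmetric])
  fix a assume a: "a \<in> qg_cands M q \<and> (\<forall>b\<in>qg_cands M q. lex_le b a)"
  have "greedy q \<in> qg_cands M q"
    using greedy_Omega[OF assms] greedy_inf_nonzero[OF assms(1)] greedy_sums[OF assms]
      by (auto simp: qg_cands_def inf_nonzero_def)
  then have "lex_le (greedy q) a" using a by auto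
  moreover have "lex_le a (greedy q)" using a greedy_maximal[OF assms(1), of a M]
    by (auto simp: qg_cands_def inf_nonzero_def qval_def sums_unique[symmetric])
  ultimately show "a = greedy q" by (rule lex_le_antisym[rotated])
qed

lemma alpha_props:
  assumes "1 < q" "q \<le> real M + 1"
  shows "alpha M q \<in> Omega M" "inf_nonzero (alpha M q)" "qval q (alpha M q) = 1"
    "\<And>e. e \<in> Omega M \<Longrightarrow> inf_nonzero e \<Longrightarrow>
      qval q e \<le> 1 \<Longrightarrow> lex_le e (alpha M q)"
  using alpha_eq_greedy[OF assms] greedy_Omega[OF assms] greedy_inf_nonzero[OF assms(1)]
    qval_greedy[OF assms] greedy_maximal[OF assms(1)]
  by auto

lemma qval_strict_antimono:
  assumes d: "d \<in> Omega M" "inf_nonzero d" and q: "1 < q1" "q1 < q2"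
  shows "qval q2 d < qval q1 d"
proof -
  have s1: "summable (\<lambda>i. real (d i) / q1 ^ Suc i)" by (rule summable_qval[OF d(1) q(1)])
  have s2: "summable (\<lambda>i. real (d i) / q2 ^ Suc i)" by (rule summable_qval[OF d(1)]) (use q in auto)
  obtain n where n: "d n \<noteq> 0" using d(2) unfolding inf_nonzero_def by blast
  have le: "real (d i) / q2 ^ Suc i \<le> real (d i) / q1 ^ Suc i" for i
    using q by (intro divide_left_mono power_mono mult_pos_pos) auto
  have lt: "real (d n) / q2 ^ Suc n < real (d n) / q1 ^ Suc n"
    using q n by (intro divide_strict_left_mono power_strict_mono mult_pos_pos) auto
  have "0 < (\<Sum>i. real (d i) / q1 ^ Suc i - real (d i) / q2 ^ Suc i)"
    by (rule suminf_pos2[of _ n]) (use s1 s2 le lt in \<open>auto intro: summable_diff\<close>)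
  also have "\<dots> = qval q1 d - qval q2 d" unfolding qval_def by (rule suminf_diff[OF s1 s2, symmetric])
  finally show ?thesis by simp
qed

lemma alpha_strict_mono:
  assumes "1 < q1" "q1 < q2" "q2 \<le> real M + 1"
  shows "lex_less (alpha M q1) (alpha M q2)"
proof -
  have a1: "1 < q1" "q1 \<le> real M + 1" and a2: "1 < q2" "q2 \<le> real M + 1" using assms by auto
  note p1 = alpha_props[OF a1] and p2 = alpha_props[OF a2]
  have v: "qval q2 (alpha M q1) < 1"
    using qval_strict_antimono[OF p1(1,2) assms(1,2)] p1(3) by simp
  then have "lex_le (alpha M q1) (alpha M q2)" using p2(4)[OF p1(1,2)] by simp
  moreover have "alpha M q1 \<noteq> alpha M q2" using v p2(3) by auto
  ultimately show ?thesis by (simp add: lex_le_def)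
qed

lemma alpha_mono:
  "1 < q1 \<Longrightarrow> q1 \<le> q2 \<Longrightarrow> q2 \<le> real M + 1 \<Longrightarrow>
    lex_le (alpha M q1) (alpha M q2)"
  using alpha_strict_mono[of q1 q2 M] by (cases "q1 = q2") (auto simp: lex_le_def)

lemma alpha_le_imp_le:
  assumes "1 < q1" "q1 \<le> real M + 1" "1 < q2" "q2 \<le> real M + 1"
    "lex_le (alpha M q1) (alpha M q2)"
  shows "q1 \<le> q2"
proof (rule ccontr)
  assume "\<not> q1 \<le> q2"
  then have "lex_less (alpha M q2) (alpha M q1)" using assms by (intro alpha_strict_mono) auto
  then show False using assms(5) not_lex_le_iff by blast
qed

lemma alpha_less_imp_less:
  assumes "1 < q1" "q1 \<le> real M + 1" "1 < q2" "q2 \<le> real M + 1"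
    "lex_less (alpha M q1) (alpha M q2)"
  shows "q1 < q2"
proof (rule ccontr)
  assume "\<not> q1 < q2"
  then have "q2 \<le> q1" by simp
  then have "lex_le (alpha M q2) (alpha M q1)"
    using assms alpha_strict_mono[of q2 q1 M] by (cases "q2 = q1") (auto simp: lex_le_def)
  then show False using assms(5) not_lex_le_iff by blast
qed

lemma alpha_inj:
  assumes "1 < q1" "q1 \<le> real M + 1" "1 < q2" "q2 \<le> real M + 1" "alpha M q1 = alpha M q2"
  shows "q1 = q2"
  using alpha_le_imp_le[OF assms(1-4)] alpha_le_imp_le[OF assms(3,4,1,2)] assms(5) by force

lemma qval_diff_at_first_difference:
  assumes x: "x \<in> Omega M" and d: "d \<in> Omega M" and q: "1 < q"
    and k: "\<forall>i<k. x i = d i" "x k < d k"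
  shows "qval q x - qval q d \<le> (qval q (shift (Suc k) x) - qval q (shift (Suc k) d) - 1) / q ^ Suc k"
proof -
  let ?P = "\<Sum>i<k. real (d i) / q ^ Suc i" and ?Q = "q ^ Suc k"
  have "qval q x = ?P + real (x k) / ?Q + qval q (shift (Suc k) x) / ?Q"
    using qval_split[OF x q, of "Suc k"] k(1) by simp
  moreover have "qval q d = ?P + real (d k) / ?Q + qval q (shift (Suc k) d) / ?Q"
    using qval_split[OF d q, of "Suc k"] by simp
  moreover have "real (x k) \<le> real (d k) - 1" using k(2) by simp
  then have "real (x k) / ?Q \<le> (real (d k) - 1) / ?Q" using q by (intro divide_right_mono) auto
  ultimately show ?thesis by (simp add: diff_divide_distrib add_divide_distrib)
qed

text \<open>Parry's criterion: an expansion of 1 all of whose shifts are lexicographically below it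
  is the quasi-greedy expansion. The key step is that no shift has value exceeding 1.\<close>

lemma qval_shift_le_one:
  assumes d: "d \<in> Omega M" "inf_nonzero d" and q: "1 < q" and v: "qval q d = 1"
    and sh: "\<And>n. lex_le (shift n d) d"
  shows "qval q (shift n d) \<le> 1"
proof -
  define f where "f n = qval q (shift n d)" for n
  have bdd: "bdd_above (range f)"
    unfolding f_def using qval_le[OF shift_Omega[OF d(1)] q] by (intro bdd_aboveI2) auto
  define S where "S = Sup (range f)"
  have fS: "f n \<le> S" for n unfolding S_def by (rule cSUP_upper[OF _ bdd]) auto
  show ?thesis
  proof (rule ccontr)
    assume "\<not> qval q (shift n d) \<le> 1"
    then have S1: "S > 1" using fS[of n] by (simp add: f_def)
    have "f n \<le> 1 + (S - 1) / q" for n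
    proof (cases "shift n d = d")
      case True then show ?thesis using v S1 q by (simp add: f_def)
    next
      case False
      then have "lex_less (shift n d) d" using sh[of n] by (simp add: lex_le_def)
      then obtain k where k: "\<forall>i<k. shift n d i = d i" "shift n d k < d k"
        unfolding lex_less_def by auto
      have "0 < qval q (shift (Suc k) d)"
        by (rule qval_pos[OF shift_Omega[OF d(1)] q shift_inf_nonzero[OF d(2)]])
      then have "f n - 1 < (f (Suc k + n) - 1) / q ^ Suc k"
        using qval_diff_at_first_difference[OF shift_Omega[OF d(1)] d(1) q k] v q
        by (simp add: f_def divide_strict_right_mono add.commute order_le_less_trans)
      also have "\<dots> \<le> (S - 1) / q ^ Suc k" using fS q by (intro divide_right_mono) auto
      also have "\<dots> \<le> (S - 1) / q"
        using S1 q by (intro divide_left_mono) (auto intro!: mult_le_cancel_left1[THEN iffD2] one_le_power)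
      finally show ?thesis by simp
    qed
    then have "S \<le> 1 + (S - 1) / q" unfolding S_def by (intro cSUP_least) auto
    then have "(S - 1) * q \<le> S - 1" using q by (simp add: field_simps)
    then show False using S1 q by (simp add: mult_le_cancel_left1)
  qed
qed

lemma alpha_eqI:
  assumes d: "d \<in> Omega M" "inf_nonzero d" and q: "1 < q" "q \<le> real M + 1" and v: "qval q d = 1"
    and sh: "\<And>n. lex_le (shift n d) d"
  shows "alpha M q = d"
proof (rule ccontr)
  note p = alpha_props[OF q]
  assume "alpha M q \<noteq> d"
  then have "lex_less d (alpha M q)" using p(4)[OF d] v by (auto simp: lex_le_def)
  then obtain k where k: "\<forall>i<k. d i = alpha M q i" "d k < alpha M q k" unfolding lex_less_def by auto
  have "qval q (shift (Suc k) d) \<le> 1" by (rule qval_shift_le_one[OF d q(1) v sh])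
  moreover have "0 < qval q (shift (Suc k) (alpha M q))"
    by (rule qval_pos[OF shift_Omega[OF p(1)] q(1) shift_inf_nonzero[OF p(2)]])
  ultimately have "qval q d - qval q (alpha M q) < 0"
    using qval_diff_at_first_difference[OF d(1) p(1) q(1) k] q(1)
    by (smt (verit) divide_neg_pos zero_less_power)
  then show False using v p(3) by simp
qed

lemma continuous_on_qval_inverse:
  assumes d: "d \<in> Omega M" and ab: "0 < a" "b < 1"
  shows "continuous_on {a..b} (\<lambda>x. qval (1 / x) d)"
proof (rule continuous_at_imp_continuous_on, intro ballI)
  fix x assume x: "x \<in> {a..b}"
  define K where "K = (1 + b) / 2"
  have K: "0 < K" "b < K" "K < 1" using x ab by (auto simp: K_def)
  have dM: "real (d i) \<le> real M" for i using d by (auto simp: Omega_def)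
  have summ: "summable (\<lambda>n. real (d n) * y ^ n)" if "0 \<le> y" "y \<le> K" for y
  proof (rule summable_comparison_test')
    show "summable (\<lambda>n. real M * K ^ n)" using K by (intro summable_mult summable_geometric) auto
    fix n show "norm (real (d n) * y ^ n) \<le> real M * K ^ n"
      using K dM[of n] that by (auto intro!: mult_mono power_mono)
  qed
  have "\<forall>\<^sub>F y in nhds x. y \<in> {0<..<K}" using x ab K by (intro eventually_nhds_in_open) auto
  then have "\<forall>\<^sub>F y in nhds x. qval (1 / y) d = y * (\<Sum>i. real (d i) * y ^ i)"
    by eventually_elim
      (use summ in \<open>auto simp: qval_def power_one_over suminf_mult[symmetric] algebra_simps\<close>)
  moreover have "isCont (\<lambda>y. y * (\<Sum>i. real (d i) * y ^ i)) x"
    using x ab K by (intro isCont_mult continuous_ident isCont_powser[OF summ[of K]]) auto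
  ultimately show "isCont (\<lambda>x. qval (1 / x) d) x" by (simp add: isCont_cong)
qed

lemma qval_inverse_ge_one:
  assumes d: "d \<in> Omega M" "inf_nonzero d" and a: "a < 1"
  shows "\<exists>x. a \<le> x \<and> 0 < x \<and> x < 1 \<and> 1 \<le> qval (1 / x) d"
proof -
  obtain n1 where n1: "d n1 \<noteq> 0" using d(2) unfolding inf_nonzero_def by blast
  obtain n2 where n2: "n2 \<ge> Suc n1" "d n2 \<noteq> 0" using d(2) unfolding inf_nonzero_def by blast
  define N where "N = Suc n2"
  have "real (d n1) + real (d n2) = (\<Sum>i\<in>{n1, n2}. real (d i))" using n2 by simp
  also have "\<dots> \<le> (\<Sum>i<N. real (d i))" using n2 by (intro sum_mono2) (auto simp: N_def)
  finally have sum2: "2 \<le> (\<Sum>i<N. real (d i))" using n1 n2 by linarith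
  define x where "x = max (root N (1/2)) a"
  have "0 < N" by (simp add: N_def)
  then have root: "0 < root N (1/2)" "root N (1/2) < 1" "root N (1/2) ^ N = 1/2" by auto
  then have x: "a \<le> x" "0 < x" "x < 1" "1/2 \<le> x ^ N"
    using a power_mono[of "root N (1/2)" x N] by (auto simp: x_def)
  have "2 * (1/2) \<le> (\<Sum>i<N. real (d i)) * x ^ N" using sum2 x(4) by (intro mult_mono) auto
  then have "1 \<le> (\<Sum>i<N. real (d i)) * x ^ N" by simp
  also have "\<dots> \<le> (\<Sum>i<N. real (d i) * x ^ Suc i)"
    unfolding sum_distrib_right using x by (intro sum_mono mult_left_mono power_decreasing) (auto simp: N_def)
  also have "\<dots> = (\<Sum>i<N. real (d i) / (1 / x) ^ Suc i)" by (simp add: power_one_over)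
  also have "\<dots> \<le> qval (1 / x) d"
    unfolding qval_def using x by (intro sum_le_suminf summable_qval[OF d(1)]) auto
  finally show ?thesis using x by blast
qed

lemma exists_alpha_eq:
  assumes M: "M \<ge> 1" and d: "d \<in> Omega M" "inf_nonzero d" and sh: "\<And>n. lex_le (shift n d) d"
  shows "\<exists>q. 1 < q \<and> q \<le> real M + 1 \<and> alpha M q = d"
proof -
  define a where "a = 1 / (real M + 1)"
  have a: "0 < a" "a < 1" using M by (auto simp: a_def)
  have "qval (1 / a) d \<le> 1" using qval_le_one_at_Mp1[OF d(1)] by (simp add: a_def)
  moreover obtain x1 where x1: "a \<le> x1" "x1 < 1" "1 \<le> qval (1 / x1) d"
    using qval_inverse_ge_one[OF d a(2)] by blast
  ultimately obtain x where x: "a \<le> x" "x \<le> x1" "qval (1 / x) d = 1"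
    using IVT'[OF _ _ _ continuous_on_qval_inverse[OF d(1) a(1) x1(2)]] by blast
  have "0 < x" "x < 1" using x x1 a by auto
  then have "1 < 1 / x" by simp
  moreover have "1 / x \<le> 1 / a" using x(1) a(1) by (intro divide_left_mono) auto
  ultimately have q: "1 < 1 / x" "1 / x \<le> real M + 1" by (auto simp: a_def)
  then show ?thesis using alpha_eqI[OF d q x(3) sh] by blast
qed


section \<open>Lexicographic order on words of equal length\<close>

definition wlex_less :: "nat list \<Rightarrow> nat list \<Rightarrow> bool" where
  "wlex_less u v \<longleftrightarrow> (\<exists>t<length u. (\<forall>j<t. u!j = v!j) \<and> u!t < v!t)"

abbreviation wlex_le :: "nat list \<Rightarrow> nat list \<Rightarrow> bool" where
  "wlex_le u v \<equiv> u = v \<or> wlex_less u v"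

lemma wlex_less_irrefl[simp]: "\<not> wlex_less u u" by (auto simp: wlex_less_def)

lemma wlex_less_trans: "length u = length v \<Longrightarrow> wlex_less u v \<Longrightarrow>
  wlex_less v w \<Longrightarrow> wlex_less u w"
  unfolding wlex_less_def
proof (elim exE conjE)
  fix t1 t2 assume l: "length u = length v" and a1: "t1 < length u" "\<forall>j<t1. u ! j = v ! j"
    "u ! t1 < v ! t1"
    and a2: "t2 < length v" "\<forall>j<t2. v ! j = w ! j" "v ! t2 < w ! t2"
  show "\<exists>t<length u. (\<forall>j<t. u ! j = w ! j) \<and> u ! t < w ! t"
  proof (cases "t1 < t2")
    case True then show ?thesis using a1 a2 by (intro exI[of _ t1]) auto
  next
    case False then show ?thesis using a1 a2 l
      by (intro exI[of _ t2]) (auto simp: not_less order_le_less)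
  qed
qed

lemma wlex_less_asym: "length u = length v \<Longrightarrow> wlex_less u v \<Longrightarrow> \<not> wlex_less v u"
  using wlex_less_trans wlex_less_irrefl by metis

lemma wlex_le_trans: "length u = length v \<Longrightarrow> wlex_le u v \<Longrightarrow>
  wlex_le v w \<Longrightarrow> wlex_le u w"
  using wlex_less_trans by metis

lemma wlex_le_less_trans: "length u = length v \<Longrightarrow> wlex_le u v \<Longrightarrow>
  wlex_less v w \<Longrightarrow> wlex_less u w"
  using wlex_less_trans by metis

lemma wlex_less_le_trans: "length u = length v \<Longrightarrow> wlex_less u v \<Longrightarrow>
  wlex_le v w \<Longrightarrow> wlex_less u w"
  using wlex_less_trans by metis

lemma wlex_le_antisym: "length u = length v \<Longrightarrow> wlex_le u v \<Longrightarrow>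
  wlex_le v u \<Longrightarrow> u = v"
  using wlex_less_asym by metis

lemma wlex_less_not_le: "length u = length v \<Longrightarrow> wlex_less u v \<Longrightarrow> \<not> wlex_le v u"
  using wlex_less_asym by fastforce

lemma wlex_less_append:
  assumes "length u1 = length v1"
  shows "wlex_less (u1 @ u2) (v1 @ v2) \<longleftrightarrow> wlex_less u1 v1 \<or> (u1 = v1 \<and>
    wlex_less u2 v2)"
proof
  assume "wlex_less (u1 @ u2) (v1 @ v2)"
  then obtain t where t: "t < length (u1 @ u2)" "\<forall>j<t. (u1 @ u2) ! j = (v1 @ v2) ! j"
    "(u1 @ u2) ! t < (v1 @ v2) ! t"
    unfolding wlex_less_def by blast
  show "wlex_less u1 v1 \<or> (u1 = v1 \<and> wlex_less u2 v2)"
  proof (cases "t < length u1")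
    case True
    then have "wlex_less u1 v1" using t assms unfolding wlex_less_def
      by (intro exI[of _ t]) (auto simp: nth_append)
    then show ?thesis ..
  next
    case False
    have "u1 = v1"
    proof (rule nth_equalityI)
      fix j assume "j < length u1"
      then show "u1 ! j = v1 ! j" using t(2)[rule_format, of j] False assms by (auto simp: nth_append)
    qed (use assms in simp)
    moreover have "wlex_less u2 v2" unfolding wlex_less_def
    proof (intro exI[of _ "t - length u1"] conjI allI impI)
      show "t - length u1 < length u2" using t(1) False by auto
      show "u2 ! (t - length u1) < v2 ! (t - length u1)" using t(3) False assms by (auto simp: nth_append)
      fix j assume "j < t - length u1"
      then show "u2 ! j = v2 ! j" using t(2)[rule_format, of "j + length u1"] assms by (auto simp: nth_append)
    qed
    ultimately show ?thesis by simp
  qed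
next
  assume "wlex_less u1 v1 \<or> (u1 = v1 \<and> wlex_less u2 v2)"
  then show "wlex_less (u1 @ u2) (v1 @ v2)"
  proof
    assume "wlex_less u1 v1"
    then obtain t where "t < length u1" "\<forall>j<t. u1 ! j = v1 ! j"
      "u1 ! t < v1 ! t" unfolding wlex_less_def by blast
    then show ?thesis unfolding wlex_less_def using assms by (intro exI[of _ t]) (auto simp: nth_append)
  next
    assume a: "u1 = v1 \<and> wlex_less u2 v2"
    then obtain t where "t < length u2" "\<forall>j<t. u2 ! j = v2 ! j"
      "u2 ! t < v2 ! t" unfolding wlex_less_def by blast
    then show ?thesis unfolding wlex_less_def using a
      by (intro exI[of _ "length u1 + t"]) (auto simp: nth_append)
  qed
qed

lemma wless_iff_wlex_less: "length u = length v \<Longrightarrow> wless u v \<longleftrightarrow> wlex_less u v"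
  unfolding wless_def lex_less_def wlex_less_def pad0_def
proof
  assume l: "length u = length v"
  assume "\<exists>n. (\<forall>i<n. (if i < length u then u ! i else 0) =
    (if i < length v then v ! i else 0)) \<and>
        (if n < length u then u ! n else 0) < (if n < length v then v ! n else 0)"
  then obtain n where n: "\<forall>i<n. (if i < length u then u ! i else 0) = (if i < length v then v ! i else 0)"
    "(if n < length u then u ! n else 0) < (if n < length v then v ! n else 0)" by blast
  have "n < length u" using n(2) l by (auto split: if_splits)
  then show "\<exists>t<length u. (\<forall>j<t. u ! j = v ! j) \<and> u ! t < v ! t"
  proof (intro exI[of _ n] conjI allI impI)
    fix j assume "j < n" then show "u ! j = v ! j" using n(1) l \<open>n < length u\<close>
      by (metis order.strict_trans)
  qed (use n l \<open>n < length u\<close> in auto)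
next
  assume l: "length u = length v"
  assume "\<exists>t<length u. (\<forall>j<t. u ! j = v ! j) \<and> u ! t < v ! t"
  then obtain t where "t<length u" "\<forall>j<t. u ! j = v ! j" "u ! t < v ! t" by blast
  then show "\<exists>n. (\<forall>i<n. (if i < length u then u ! i else 0) =
    (if i < length v then v ! i else 0)) \<and>
        (if n < length u then u ! n else 0) < (if n < length v then v ! n else 0)"
    using l by (intro exI[of _ t]) auto
qed

lemma pad0_inj: "length u = length v \<Longrightarrow> pad0 u = pad0 v \<Longrightarrow> u = v"
proof (rule nth_equalityI)
  fix i assume "length u = length v" "pad0 u = pad0 v" "i < length u"
  then have "pad0 u i = pad0 v i" by simp
  then show "u ! i = v ! i" using \<open>i < length u\<close> \<open>length u = length v\<close>
    by (simp add: pad0_def)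
qed

lemma wle_iff_wlex_le: "length u = length v \<Longrightarrow> wle u v \<longleftrightarrow> wlex_le u v"
  unfolding wle_def lex_le_def using wless_iff_wlex_less[of u v] pad0_inj[of u v] by (auto simp: wless_def)

lemma length_wplus[simp]: "u \<noteq> [] \<Longrightarrow> length (wplus u) = length u"
  by (simp add: wplus_def)

lemma wplus_nth: "u \<noteq> [] \<Longrightarrow> j < length u \<Longrightarrow>
  wplus u ! j = (if j = length u - 1 then u ! j + 1 else u ! j)"
  by (auto simp: wplus_def nth_append last_conv_nth nth_butlast)

lemma wplus_ne[simp]: "wplus u \<noteq> []" by (simp add: wplus_def)
lemma wrefl_Nil[simp]: "wrefl M u = [] \<longleftrightarrow> u = []" by (simp add: wrefl_def)

lemma length_wrefl[simp]: "length (wrefl M u) = length u" by (simp add: wrefl_def)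

lemma wrefl_nth[simp]: "j < length u \<Longrightarrow> wrefl M u ! j = M - u ! j" by (simp add: wrefl_def)

lemma wrefl_wrefl: "\<forall>x\<in>set u. x \<le> M \<Longrightarrow> wrefl M (wrefl M u) = u"
  by (rule nth_equalityI) (auto simp: nth_mem)

lemma wrefl_le: "\<forall>x\<in>set (wrefl M u). x \<le> M" by (auto simp: wrefl_def)

lemma wrefl_take: "wrefl M (take i u) = take i (wrefl M u)" by (simp add: wrefl_def take_map)
lemma wrefl_drop: "wrefl M (drop i u) = drop i (wrefl M u)" by (simp add: wrefl_def drop_map)

lemma wlex_less_wrefl:
  assumes "length u = length v" "\<forall>x\<in>set u. x \<le> M" "\<forall>x\<in>set v. x \<le> M" "wlex_less u v"
  shows "wlex_less (wrefl M v) (wrefl M u)"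
proof -
  obtain t where t: "t < length u" "\<forall>j<t. u ! j = v ! j"
    "u ! t < v ! t" using assms(4) unfolding wlex_less_def by blast
  have "v ! t \<le> M" using assms(1,3) t(1) by (auto simp: nth_mem)
  then show ?thesis unfolding wlex_less_def using t assms(1) by (intro exI[of _ t]) auto
qed

lemma wlex_le_wrefl:
  assumes "length u = length v" "\<forall>x\<in>set u. x \<le> M" "\<forall>x\<in>set v. x \<le> M" "wlex_le u v"
  shows "wlex_le (wrefl M v) (wrefl M u)"
  using wlex_less_wrefl[OF assms(1-3)] assms(4) by auto

lemma wlex_less_wplus: "u \<noteq> [] \<Longrightarrow> wlex_less u (wplus u)"
  unfolding wlex_less_def by (intro exI[of _ "length u - 1"]) (auto simp: wplus_nth)

lemma wrefl_wplus_less: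
  assumes "u \<noteq> []" "last u < M"
  shows "wlex_less (wrefl M (wplus u)) (wrefl M u)"
  unfolding wlex_less_def using assms
  by (intro exI[of _ "length u - 1"]) (auto simp: wplus_nth last_conv_nth)

lemma set_wplus_le: "u \<noteq> [] \<Longrightarrow> last u < M \<Longrightarrow>
  \<forall>x\<in>set u. x \<le> M \<Longrightarrow> \<forall>x\<in>set (wplus u). x \<le> M"
  by (auto simp: wplus_def dest: in_set_butlastD)

lemma wlex_less_imp_wplus_le:
  assumes "length u = length w" "u \<noteq> []" "wlex_less u w"
  shows "wplus u = w \<or> wlex_less (wplus u) w"
proof -
  obtain t where t: "t < length u" "\<forall>j<t. u ! j = w ! j"
    "u ! t < w ! t" using assms(3) unfolding wlex_less_def by blast
  show ?thesis
  proof (cases "t = length u - 1")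
    case False
    then show ?thesis using t assms unfolding wlex_less_def
      by (intro disjI2 exI[of _ t]) (auto simp: wplus_nth)
  next
    case True
    show ?thesis
    proof (cases "u ! t + 1 = w ! t")
      case True2: True
      have "wplus u = w"
      proof (rule nth_equalityI)
        fix i assume "i < length (wplus u)"
        then have "i < length u" using assms by simp
        then show "wplus u ! i = w ! i" using assms t True True2
          by (cases "i < t") (auto simp: wplus_nth)
      qed (use assms in simp)
      then show ?thesis ..
    next
      case False
      then show ?thesis using t assms True unfolding wlex_less_def
        by (intro disjI2 exI[of _ t]) (auto simp: wplus_nth)
    qed
  qed
qed

lemma wlex_le_between_wplus:
  assumes "length w = length u" "u \<noteq> []" "wlex_le u w" "wlex_le w (wplus u)"
  shows "w = u \<or> w = wplus u"
proof (rule ccontr)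
  assume a: "\<not> (w = u \<or> w = wplus u)"
  then have "wlex_less u w" using assms(3) by auto
  then have "wplus u = w \<or> wlex_less (wplus u) w" using wlex_less_imp_wplus_le assms by auto
  then have "wlex_less (wplus u) w" using a by auto
  then show False using assms(4) a wlex_less_asym[of w "wplus u"] assms(1,2) by auto
qed

lemma wplus_append: "v \<noteq> [] \<Longrightarrow> wplus (u @ v) = u @ wplus v"
  by (simp add: wplus_def butlast_append)

lemma drop_wplus: "i < length u \<Longrightarrow> drop i (wplus u) = wplus (drop i u)"
  by (simp add: wplus_def drop_butlast last_drop butlast_append)

lemma take_wplus: "i < length u \<Longrightarrow> take i (wplus u) = take i u"
  by (simp add: wplus_def take_butlast)


section \<open>Segments and blocks of sequences\<close>

definition seg :: "(nat \<Rightarrow> nat) \<Rightarrow> nat \<Rightarrow> nat \<Rightarrow> nat list" where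
  "seg x p l = map (\<lambda>j. x (p + j)) [0..<l]"

lemma length_seg[simp]: "length (seg x p l) = l" by (simp add: seg_def)
lemma seg_Nil[simp]: "seg x p l = [] \<longleftrightarrow> l = 0" by (simp add: seg_def)
lemma seg_nth[simp]: "j < l \<Longrightarrow> seg x p l ! j = x (p + j)" by (simp add: seg_def)

lemma seg_eq_iff: "seg x p l = seg x' p l \<longleftrightarrow> (\<forall>j<l. x (p+j) = x' (p+j))"
  by (auto simp: seg_def)

lemma seg_less_imp_lex_less:
  assumes "\<forall>j<p. x j = x' j" "wlex_less (seg x p l) (seg x' p l)"
  shows "lex_less x x'"
proof -
  obtain t where t: "t < l" "\<forall>j<t. x (p + j) = x' (p + j)" "x (p + t) < x' (p + t)"
    using assms(2) unfolding wlex_less_def by auto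
  show ?thesis unfolding lex_less_def
  proof (intro exI[of _ "p + t"] conjI allI impI)
    fix i assume "i < p + t"
    then show "x i = x' i" using assms(1) t(2)[rule_format, of "i - p"] by (cases "i < p") auto
  qed (use t in auto)
qed

lemma lex_le_imp_seg_le:
  assumes "lex_le x x'" "\<forall>j<p. x j = x' j"
  shows "wlex_le (seg x p l) (seg x' p l)"
proof (cases "x = x'")
  case False
  then obtain n where n: "\<forall>i<n. x i = x' i"
    "x n < x' n" using assms(1) by (auto simp: lex_le_def lex_less_def)
  have "p \<le> n" using n assms(2) by (metis less_irrefl not_le)
  show ?thesis
  proof (cases "n < p + l")
    case True
    then have "wlex_less (seg x p l) (seg x' p l)" unfolding wlex_less_def using n \<open>p \<le> n\<close>
      by (intro exI[of _ "n - p"]) auto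
    then show ?thesis ..
  next
    case False
    then show ?thesis using n by (auto simp: seg_eq_iff)
  qed
qed simp

lemma seg_append: "seg x p (l1 + l2) = seg x p l1 @ seg x (p + l1) l2"
  by (rule nth_equalityI) (auto simp: nth_append add.assoc)

lemma seg_shift: "seg (shift n x) p l = seg x (n + p) l"
  by (auto simp: seg_def shift_def add.commute add.left_commute)

lemma seg_srefl: "seg (srefl M x) p l = wrefl M (seg x p l)"
  by (auto simp: seg_def srefl_def wrefl_def)

definition block :: "nat \<Rightarrow> (nat \<Rightarrow> nat) \<Rightarrow> nat \<Rightarrow> nat list" where
  "block m x k = seg x (k * m) m"

lemma block_nth: "j < m \<Longrightarrow> block m x k ! j = x (k * m + j)" by (simp add: block_def)

lemma block_decomp: "0 < m \<Longrightarrow> x j = block m x (j div m) ! (j mod m)"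
  by (simp add: block_nth)

lemma block_ext: "0 < m \<Longrightarrow> (\<And>k. block m x k = block m x' k) \<Longrightarrow> x = x'"
  by (rule ext) (metis block_decomp)

lemma block_agree:
  assumes "0 < m" "\<forall>t<k. block m x t = block m x' t"
  shows "\<forall>j<k*m. x j = x' j"
proof (intro allI impI)
  fix j assume "j < k * m"
  then have "j div m < k" using assms(1) by (simp add: div_less_iff_less_mult)
  then show "x j = x' j" using assms block_decomp[of m x j] block_decomp[of m x' j] by auto
qed

lemma block_less_imp_lex_less: "0 < m \<Longrightarrow>
  \<forall>t<k. block m x t = block m x' t \<Longrightarrow>
    wlex_less (block m x k) (block m x' k) \<Longrightarrow> lex_less x x'"
  unfolding block_def by (rule seg_less_imp_lex_less[OF block_agree[unfolded block_def]])

lemma lex_le_imp_block_le: "0 < m \<Longrightarrow> lex_le x x' \<Longrightarrow>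
  \<forall>t<k. block m x t = block m x' t \<Longrightarrow> wlex_le (block m x k) (block m x' k)"
  unfolding block_def by (rule lex_le_imp_seg_le[OF _ block_agree[unfolded block_def]])

lemma block_shift: "block m (shift (i * m) x) t = block m x (i + t)"
  by (simp add: block_def seg_shift algebra_simps)

lemma block_srefl: "block m (srefl M x) k = wrefl M (block m x k)"
  by (simp add: block_def seg_srefl)

lemma length_block[simp]: "length (block m x k) = m" by (simp add: block_def)


section \<open>Sequences built from edge labels\<close>

text \<open>Encode the vertices $B$ and $A$ of $G$ by the bits 0 and 1. An edge other than $e_0$ is
  then determined by the bit $u$ of its source and its $\mathcal L^*$-label $v$, which is also the
  bit of its target; \<^term>\<open>edge_word M c u v\<close> is its $\mathcal L_c$-label (for $e_0$ take $u = 0$).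
  Hence \<^term>\<open>expand M c s y\<close>, the concatenation of these labels along the bit sequence $y$
  started at bit $s$, is $\Phi_c^{-1}(y)$ when $s = 0$ and $y_0 = 1$.\<close>

definition incrementable :: "nat \<Rightarrow> nat list \<Rightarrow> bool" where
  "incrementable M c \<longleftrightarrow> c \<noteq> [] \<and>
    (\<forall>x\<in>set c. x \<le> M) \<and> last c < M"

definition edge_word :: "nat \<Rightarrow> nat list \<Rightarrow> nat \<Rightarrow> nat
  \<Rightarrow> nat list" where
  "edge_word M c u v = (if u = 0 then (if v = 0 then c else wplus c) else (if v =
    0 then wrefl M (wplus c) else wrefl M c))"

definition prev_bit :: "nat \<Rightarrow> (nat \<Rightarrow> nat) \<Rightarrow> nat \<Rightarrow> nat" where
  "prev_bit s y k = (if k = 0 then s else y (k - 1))"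

definition expand :: "nat \<Rightarrow> nat list \<Rightarrow> nat \<Rightarrow> (nat \<Rightarrow>
  nat) \<Rightarrow> nat \<Rightarrow> nat" where
  "expand M c s y = (\<lambda>i. edge_word M c (prev_bit s y (i div length c)) (y (i div length c))
    ! (i mod length c))"

lemma prev_bit_0[simp]: "prev_bit s y 0 = s" and prev_bit_Suc[simp]: "prev_bit s y (Suc k) = y k"
  by (auto simp: prev_bit_def)

lemma binary_le_one: "y \<in> Omega 1 \<Longrightarrow> y k \<le> 1" by (auto simp: Omega_def)
lemma binary_cases: "y \<in> Omega 1 \<Longrightarrow> y k = 0 \<or> y k = 1" using binary_le_one[of y k] by auto

lemma prev_bit_le: "s \<le> 1 \<Longrightarrow> y \<in> Omega 1 \<Longrightarrow> prev_bit s y k \<le> 1"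
  by (cases k) (auto simp: Omega_def)

context
  fixes M :: nat and c :: "nat list"
  assumes ok: "incrementable M c"
begin

lemma incrementable_nonempty: "c \<noteq> []" using ok by (simp add: incrementable_def)
lemma incrementable_length_pos: "0 < length c" using incrementable_nonempty by simp

lemma length_edge_word[simp]: "length (edge_word M c u v) = length c"
  using incrementable_nonempty by (simp add: edge_word_def)

lemma incrementable_le: "\<forall>x\<in>set c. x \<le> M" using ok by (simp add: incrementable_def)
lemma incrementable_wplus_le: "\<forall>x\<in>set (wplus c). x \<le> M"
  using ok set_wplus_le[of c M] by (simp add: incrementable_def)

lemma set_edge_word_le: "\<forall>x\<in>set (edge_word M c u v). x \<le> M"
  using incrementable_le incrementable_wplus_le wrefl_le by (simp add: edge_word_def)

lemma wrefl_edge_word: "u \<le> 1 \<Longrightarrow> v \<le> 1 \<Longrightarrow>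
  wrefl M (edge_word M c u v) = edge_word M c (1 - u) (1 - v)"
  using wrefl_wrefl[OF incrementable_le] wrefl_wrefl[OF incrementable_wplus_le] by (auto simp: edge_word_def)

lemma edge_word_less: "wlex_less (edge_word M c u 0) (edge_word M c u 1)"
  using wlex_less_wplus[OF incrementable_nonempty] wrefl_wplus_less[OF incrementable_nonempty] ok
    by (simp add: edge_word_def incrementable_def)

lemma wplus_edge_word: "wplus (edge_word M c u 0) = edge_word M c u 1"
proof (cases "u = 0")
  case False
  have "wplus (wrefl M (wplus c)) = wrefl M c"
  proof (rule nth_equalityI)
    fix i assume i: "i < length (wplus (wrefl M (wplus c)))"
    have "c ! (length c - 1) < M" using ok incrementable_nonempty by (simp add: incrementable_def last_conv_nth)
    have ne: "wrefl M (wplus c) \<noteq> []" using incrementable_nonempty by (simp add: wrefl_def wplus_def)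
    have i': "i < length c" using i incrementable_nonempty ne by simp
    have "wplus (wrefl M (wplus c)) ! i = (if i = length c - 1 then M - wplus c ! i + 1 else M - wplus c ! i)"
      using i' incrementable_nonempty ne by (subst wplus_nth) auto
    also have "\<dots> = M - c ! i" using i' incrementable_nonempty \<open>c ! (length c - 1) <
      M\<close> by (auto simp: wplus_nth)
    finally show "wplus (wrefl M (wplus c)) ! i = wrefl M c ! i" using i' by simp
  qed (use incrementable_nonempty in simp)
  then show ?thesis using False by (simp add: edge_word_def)
qed (simp add: edge_word_def)

lemma block_expand: "block (length c) (expand M c s y) k = edge_word M c (prev_bit s y k) (y k)"
proof (rule nth_equalityI)
  fix j assume "j < length (block (length c) (expand M c s y) k)"
  then have j: "j < length c" by simp
  have d: "(k * length c + j) div length c = k" and md: "(k * length c + j) mod length c = j"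
    using j by (auto simp: div_add1_eq)
  show "block (length c) (expand M c s y) k ! j = edge_word M c (prev_bit s y k) (y k) ! j"
    using j by (simp add: block_nth expand_def d md)
qed simp

lemma expand_Omega: "expand M c s y \<in> Omega M"
  unfolding Omega_def expand_def
proof (intro CollectI allI)
  fix i
  let ?w = "edge_word M c (prev_bit s y (i div length c)) (y (i div length c))"
  have "?w ! (i mod length c) \<in> set ?w" using incrementable_length_pos by (intro nth_mem) simp
  then show "?w ! (i mod length c) \<le> M" using set_edge_word_le by blast
qed

lemma shift_expand: "shift (k * length c) (expand M c s y) = expand M c (prev_bit s y k) (shift k y)"
proof -
  have "prev_bit (prev_bit s y k) (shift k y) (i div length c) = prev_bit s y (k + i div length c)" for i
    by (cases "i div length c") (auto simp: prev_bit_def shift_def add.commute)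
  moreover have "(i + k * length c) div length c = k + i div length c" for i using incrementable_length_pos by simp
  moreover have "(i + k * length c) mod length c = i mod length c" for i by simp
  ultimately show ?thesis unfolding expand_def shift_def by (auto simp: add.commute)
qed

lemma srefl_expand:
  assumes "y \<in> Omega 1" "s \<le> 1"
  shows "srefl M (expand M c s y) = expand M c (1 - s) (srefl 1 y)"
proof (rule block_ext[OF incrementable_length_pos])
  fix k
  have "block (length c) (srefl M (expand M c s y)) k = wrefl M (edge_word M c (prev_bit s y k) (y k))"
    by (simp add: block_srefl block_expand)
  also have "\<dots> = edge_word M c (1 - prev_bit s y k) (1 - y k)"
  proof (rule wrefl_edge_word)
    show "prev_bit s y k \<le> 1" by (rule prev_bit_le) (use assms in auto)
    show "y k \<le> 1" by (rule binary_le_one[OF assms(1)])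
  qed
  also have "\<dots> = block (length c) (expand M c (1 - s) (srefl 1 y)) k"
    by (cases k) (auto simp: block_expand srefl_def)
  finally show "block (length c) (srefl M (expand M c s y)) k =
    block (length c) (expand M c (1 - s) (srefl 1 y)) k" .
qed

lemma expand_strict_mono:
  assumes y: "y \<in> Omega 1" "y' \<in> Omega 1" and lt: "lex_less y y'"
  shows "lex_less (expand M c s y) (expand M c s y')"
proof -
  obtain k where k: "\<forall>i<k. y i = y' i" "y k < y' k" using lt unfolding lex_less_def by auto
  have yk: "y k = 0" "y' k = 1" using k(2) binary_le_one[OF y(2), of k] by auto
  have pbk: "prev_bit s y k = prev_bit s y' k" using k(1) by (cases k) auto
  show ?thesis
  proof (rule block_less_imp_lex_less[OF incrementable_length_pos, of k])
    show "\<forall>t<k. block (length c) (expand M c s y) t = block (length c) (expand M c s y') t"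
      using k(1) by (auto simp: block_expand prev_bit_def)
    show "wlex_less (block (length c) (expand M c s y) k) (block (length c) (expand M c s y') k)"
      using edge_word_less yk pbk by (simp add: block_expand)
  qed
qed

lemma expand_lex_le_iff:
  assumes y: "y \<in> Omega 1" "y' \<in> Omega 1"
  shows "lex_le (expand M c s y) (expand M c s y') \<longleftrightarrow> lex_le y y'"
  using expand_strict_mono[OF y] expand_strict_mono[OF y(2,1)] not_lex_le_iff lex_le_def by metis

lemma expand_lex_less_iff:
  assumes y: "y \<in> Omega 1" "y' \<in> Omega 1"
  shows "lex_less (expand M c s y) (expand M c s y') \<longleftrightarrow> lex_less y y'"
  using expand_lex_le_iff[OF y(2,1)] not_lex_le_iff by metis

lemma expand_inj:
  assumes y: "y \<in> Omega 1" "y' \<in> Omega 1" and e: "expand M c s y = expand M c s y'"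
  shows "y = y'"
  using expand_lex_le_iff[OF y, of s] expand_lex_le_iff[OF y(2,1), of s] e lex_le_antisym by auto

end


section \<open>Paths in $G$ and the map $\Phi$\<close>

definition edge_bit :: "edge \<Rightarrow> nat" where
  "edge_bit e = (case e of E0 \<Rightarrow> 1 | E3 \<Rightarrow> 1 | E4 \<Rightarrow> 1 | _ \<Rightarrow> 0)"

definition edge_of_bits :: "nat \<Rightarrow> nat \<Rightarrow> edge" where
  "edge_of_bits u v = (if u = 0 then (if v = 0 then E2 else E3) else (if v = 0 then E1 else E4))"

definition bits_path :: "(nat \<Rightarrow> nat) \<Rightarrow> nat \<Rightarrow> edge" where
  "bits_path y k = (if k = 0 then E0 else edge_of_bits (y (k - 1)) (y k))"

lemma edge_bit_simps[simp]: "edge_bit E0 = 1" "edge_bit E1 = 0" "edge_bit E2 = 0" "edge_bit E3 = 1"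
  "edge_bit E4 = 1"
  by (auto simp: edge_bit_def)

lemma labstar_eq: "labstar e = [edge_bit e]" by (cases e) (auto simp: edge_bit_def)

lemma lab_eq_edge_word: "lab M c e = edge_word M c (if src e = VA then 1 else 0) (edge_bit e)"
  by (cases e) (auto simp: edge_bit_def edge_word_def)

lemma tgt_eq_edge_bit: "(if tgt e = VA then 1 else 0) = edge_bit e"
  by (cases e) (auto simp: edge_bit_def)

lemma tgt_not_Start: "tgt e \<noteq> Start" by (cases e) auto

lemma edge_bit_le: "edge_bit e \<le> 1" by (cases e) (auto simp: edge_bit_def)

lemma edge_eq_edge_of_bits: "src e \<noteq> Start \<Longrightarrow>
  e = edge_of_bits (if src e = VA then 1 else 0) (edge_bit e)"
  by (cases e) (auto simp: edge_bit_def edge_of_bits_def)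

lemma edge_bit_edge_of_bits: "v \<le> 1 \<Longrightarrow> edge_bit (edge_of_bits u v) = v"
  by (auto simp: edge_bit_def edge_of_bits_def)
lemma src_edge_of_bits: "src (edge_of_bits u v) = (if u = 0 then VB else VA)" by (auto simp: edge_of_bits_def)
lemma tgt_edge_of_bits: "tgt (edge_of_bits u v) = (if v = 0 then VB else VA)" by (auto simp: edge_of_bits_def)

lemma concat_uniform:
  assumes "\<forall>w\<in>set ws. length w = m" "i < length ws * m"
  shows "concat ws ! i = ws ! (i div m) ! (i mod m)"
  using assms
proof (induction ws arbitrary: i)
  case (Cons w ws)
  have lw: "length w = m" using Cons.prems by auto
  show ?case
  proof (cases "i < m")
    case True then show ?thesis using lw by (simp add: nth_append)
  next
    case False
    then have ih: "concat ws ! (i - m) = ws ! ((i - m) div m) ! ((i - m) mod m)"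
      using Cons by auto
    have m0: "0 < m" using Cons.prems(2) by (cases m) auto
    have "(i - m) div m = i div m - 1" "(i - m) mod m = i mod m" "i div m \<noteq> 0"
      using False m0 by (auto simp: le_div_geq le_mod_geq)
    with ih show ?thesis using False lw by (simp add: nth_append nth_Cons')
  qed
qed simp

lemma length_concat_uniform: "\<forall>w\<in>set ws. length w = m \<Longrightarrow>
  length (concat ws) = length ws * m"
  by (induction ws) auto

lemma concat_inf_uniform:
  assumes "\<And>k. length (w k) = m" "0 < m"
  shows "concat_inf w n = w (n div m) ! (n mod m)"
proof -
  have "Suc n \<le> Suc n * m" using assms(2) by (cases m) auto
  then have "n < length (map w [0..<Suc n]) * m" by simp
  then have "concat (map w [0..<Suc n]) ! n = map w [0..<Suc n] ! (n div m) ! (n mod m)"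
    using assms(1) by (intro concat_uniform) auto
  moreover have "n div m < Suc n" by (simp add: le_imp_less_Suc div_le_dividend)
  ultimately show ?thesis unfolding concat_inf_def by (simp del: upt_Suc)
qed

lemma ipath_src_eq_prev_bit: "ipath p \<Longrightarrow>
  (if src (p k) = VA then 1 else 0) = prev_bit 0 (edge_bit \<circ> p) k"
  by (cases k) (auto simp: ipath_def tgt_eq_edge_bit[symmetric])

lemma concat_lab_ipath:
  assumes "ipath p" "c \<noteq> []"
  shows "concat_inf (lab M c \<circ> p) = expand M c 0 (edge_bit \<circ> p)"
proof
  fix n
  have "concat_inf (lab M c \<circ> p) n = lab M c (p (n div length c)) ! (n mod length c)"
    using assms(2) by (subst concat_inf_uniform[of _ "length c"]) (auto simp: lab_eq_edge_word edge_word_def)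
  also have "\<dots> = expand M c 0 (edge_bit \<circ> p) n"
    unfolding expand_def lab_eq_edge_word ipath_src_eq_prev_bit[OF assms(1)] by simp
  finally show "concat_inf (lab M c \<circ> p) n = expand M c 0 (edge_bit \<circ> p) n" .
qed

lemma concat_labstar_ipath: "concat_inf (labstar \<circ> p) = edge_bit \<circ> p"
  by (rule ext, subst concat_inf_uniform[of _ 1]) (auto simp: labstar_eq)

lemma ipath_edge_bits: "ipath p \<Longrightarrow> edge_bit \<circ> p \<in> Omega 1 \<and>
  (edge_bit \<circ> p) 0 = 1"
proof -
  assume "ipath p"
  moreover have "edge_bit \<circ> p \<in> Omega 1" using edge_bit_le by (auto simp: Omega_def)
  ultimately show ?thesis by (auto simp: ipath_def)
qed

lemma ipath_bits_path: "y \<in> Omega 1 \<Longrightarrow> y 0 = 1 \<Longrightarrow> ipath (bits_path y)"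
  unfolding ipath_def
proof (intro conjI allI)
  fix n assume y: "y \<in> Omega 1" "y 0 = 1"
  show "tgt (bits_path y n) = src (bits_path y (Suc n))"
    using y binary_cases[OF y(1), of n] by (cases n) (auto simp: bits_path_def tgt_edge_of_bits src_edge_of_bits)
qed (simp add: bits_path_def)

lemma edge_bit_bits_path: assumes "y \<in> Omega 1" "y 0 = 1" shows "edge_bit \<circ> bits_path y = y"
proof
  fix k show "(edge_bit \<circ> bits_path y) k = y k"
    using assms edge_bit_edge_of_bits[OF binary_le_one[OF assms(1)]]
      by (cases k) (auto simp: bits_path_def edge_bit_def)
qed

lemma X_eq: "c \<noteq> [] \<Longrightarrow> X M c = {expand M c 0 y | y. y \<in> Omega 1 \<and> y 0 = 1}"
  unfolding X_def
proof (safe)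
  fix p assume "c \<noteq> []" "ipath p"
  then show "\<exists>y. concat_inf (lab M c \<circ> p) = expand M c 0 y \<and> y \<in> Omega 1 \<and> y 0 = 1"
    using concat_lab_ipath ipath_edge_bits by blast
next
  fix y assume "c \<noteq> []" "y \<in> Omega 1" "y 0 = 1"
  then show "\<exists>p. expand M c 0 y = concat_inf (lab M c \<circ> p) \<and> ipath p"
    using concat_lab_ipath[OF ipath_bits_path] edge_bit_bits_path by (metis ipath_bits_path)
qed

lemma Phi_expand:
  assumes ok: "incrementable M c" and y: "y \<in> Omega 1" "y 0 = 1"
  shows "Phi M c (expand M c 0 y) = y"
  unfolding Phi_def
proof (rule the_equality)
  have c: "c \<noteq> []" using ok by (simp add: incrementable_def)
  show "\<exists>p. ipath p \<and> expand M c 0 y = concat_inf (lab M c \<circ> p) \<and>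
    y = concat_inf (labstar \<circ> p)"
    using ipath_bits_path[OF y] concat_lab_ipath[OF _ c] edge_bit_bits_path[OF y] concat_labstar_ipath by metis
  fix y' assume "\<exists>p. ipath p \<and> expand M c 0 y = concat_inf (lab M c \<circ> p) \<and>
    y' = concat_inf (labstar \<circ> p)"
  then obtain p where p: "ipath p" "expand M c 0 y = expand M c 0 (edge_bit \<circ> p)" "y' = edge_bit \<circ> p"
    using concat_lab_ipath[OF _ c] concat_labstar_ipath by metis
  have bits: "edge_bit \<circ> p \<in> Omega 1" using ipath_edge_bits[OF p(1)] by simp
  have "y = edge_bit \<circ> p" by (rule expand_inj[OF ok y(1) bits p(2)])
  then show "y' = y" using p(3) by simp
qed

lemma expand_in_X: "c \<noteq> [] \<Longrightarrow> y \<in> Omega 1 \<Longrightarrow>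
  y 0 = 1 \<Longrightarrow> expand M c 0 y \<in> X M c"
  by (auto simp: X_eq)

lemma inj_on_Phi: "incrementable M c \<Longrightarrow> inj_on (Phi M c) (X M c)"
  by (auto simp: inj_on_def X_eq incrementable_def Phi_expand)

lemma inv_Phi_eq_expand:
  assumes "incrementable M c" "y \<in> Omega 1" "y 0 = 1"
  shows "inv_into (X M c) (Phi M c) y = expand M c 0 y"
proof -
  have "expand M c 0 y \<in> X M c" using assms by (intro expand_in_X) (auto simp: incrementable_def)
  then show ?thesis using inv_into_f_f[OF inj_on_Phi[OF assms(1)]] Phi_expand[OF assms] by metis
qed


section \<open>The composition $a \circ b$\<close>

lemma concat_labstar: "concat (map labstar p) = map edge_bit p"
  by (induction p) (auto simp: labstar_eq)

lemma fpath_nth_Suc: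
  assumes "fpath p" "Suc k < length p"
  shows "p ! Suc k = edge_of_bits (edge_bit (p ! k)) (edge_bit (p ! Suc k))"
proof -
  have src: "src (p ! Suc k) = tgt (p ! k)" using assms by (auto simp: fpath_def)
  then have "src (p ! Suc k) \<noteq> Start" using tgt_not_Start by simp
  then have "p ! Suc k = edge_of_bits (if src (p ! Suc k) = VA then 1 else 0) (edge_bit (p ! Suc k))"
    by (rule edge_eq_edge_of_bits)
  moreover have "(if src (p ! Suc k) = VA then 1 else 0) = edge_bit (p ! k)"
    unfolding src by (rule tgt_eq_edge_bit)
  ultimately show ?thesis by argo
qed

lemma fpath_eqI:
  assumes p: "fpath p" "fpath p'" and bits: "map edge_bit p = map edge_bit p'"
  shows "p = p'"
proof (rule nth_equalityI)
  show len: "length p = length p'" using bits map_eq_imp_length_eq by blast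
  fix k assume "k < length p"
  then show "p ! k = p' ! k"
  proof (induction k)
    case 0 then show ?case using p len by (auto simp: fpath_def hd_conv_nth)
  next
    case (Suc k)
    have e: "edge_bit (p ! j) = edge_bit (p' ! j)" if "j < length p" for j
      using that len bits by (metis nth_map)
    have "p ! Suc k = edge_of_bits (edge_bit (p ! k)) (edge_bit (p ! Suc k))"
      using fpath_nth_Suc[OF p(1) Suc.prems] .
    also have "\<dots> = edge_of_bits (edge_bit (p' ! k)) (edge_bit (p' ! Suc k))"
      using e[of k] e[of "Suc k"] Suc.prems by simp
    also have "\<dots> = p' ! Suc k"
      using Suc.prems len by (intro fpath_nth_Suc[OF p(2), symmetric]) simp
    finally show ?case .
  qed
qed

lemma fpath_bits_path:
  assumes "Y \<in> Omega 1" "Y 0 = 1" "0 < n"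
  shows "fpath (map (bits_path Y) [0..<n])"
  using ipath_bits_path[OF assms(1,2)] assms(3)
  by (auto simp: fpath_def ipath_def hd_map bits_path_def simp del: upt_Suc)

lemma concat_lab_bits_path:
  assumes ok: "incrementable M a" and Y: "Y \<in> Omega 1" "Y 0 = 1"
  shows "concat (map (lab M a) (map (bits_path Y) [0..<n])) = seg (expand M a 0 Y) 0 (length a * n)"
    (is "concat ?ws = _")
proof (rule nth_equalityI)
  let ?m = "length a"
  have len: "\<forall>w\<in>set ?ws. length w = ?m" using ok by (auto simp: lab_eq_edge_word)
  then show "length (concat ?ws) = length (seg (expand M a 0 Y) 0 (?m * n))"
    using length_concat_uniform[OF len] by simp
  fix i assume "i < length (concat ?ws)"
  then have i: "i < n * ?m" using length_concat_uniform[OF len] by simp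
  then have k: "i div ?m < n"
    using incrementable_length_pos[OF ok] by (simp add: div_less_iff_less_mult mult.commute)
  have bits: "edge_bit \<circ> bits_path Y = Y" by (rule edge_bit_bits_path[OF Y])
  have "concat ?ws ! i = lab M a (bits_path Y (i div ?m)) ! (i mod ?m)"
    using concat_uniform[OF len] i k by simp
  also have "\<dots> = expand M a 0 Y i"
    unfolding expand_def lab_eq_edge_word ipath_src_eq_prev_bit[OF ipath_bits_path[OF Y]] bits
    using fun_cong[OF bits] by simp
  finally show "concat ?ws ! i = seg (expand M a 0 Y) 0 (?m * n) ! i"
    using i by (simp add: mult.commute)
qed

lemma comp_eq_seg_expand:
  assumes ok: "incrementable M a" and b: "b \<noteq> []"
    and Y: "Y \<in> Omega 1" "\<forall>j<length b. Y j = b ! j" "Y 0 = 1"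
  shows "comp M a b = seg (expand M a 0 Y) 0 (length a * length b)"
proof -
  define p0 where "p0 = map (bits_path Y) [0..<length b]"
  have fp: "fpath p0" unfolding p0_def using fpath_bits_path[OF Y(1,3)] b by simp
  have bits: "map edge_bit p0 = b"
  proof (rule nth_equalityI)
    show "length (map edge_bit p0) = length b" by (simp add: p0_def)
    fix j assume "j < length (map edge_bit p0)"
    then show "map edge_bit p0 ! j = b ! j"
      using Y(2) fun_cong[OF edge_bit_bits_path[OF Y(1,3)], of j] by (simp add: p0_def)
  qed
  have "comp M a b = concat (map (lab M a) p0)"
    unfolding comp_def
  proof (rule the_equality)
    show "\<exists>p. fpath p \<and> concat (map (lab M a) p0) = concat (map (lab M a) p) \<and>
      b = concat (map labstar p)"
      using fp bits by (auto simp: concat_labstar)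
    fix w assume "\<exists>p. fpath p \<and> w = concat (map (lab M a) p) \<and> b = concat (map labstar p)"
    then obtain p where p: "fpath p" "w = concat (map (lab M a) p)" "map edge_bit p = map edge_bit p0"
      using bits by (auto simp: concat_labstar)
    then show "w = concat (map (lab M a) p0)" using fpath_eqI[OF p(1) fp p(3)] by simp
  qed
  also have "\<dots> = seg (expand M a 0 Y) 0 (length a * length b)"
    unfolding p0_def by (rule concat_lab_bits_path[OF ok Y(1,3)])
  finally show ?thesis .
qed

abbreviation zeros :: "nat \<Rightarrow> nat" where "zeros \<equiv> (\<lambda>_. 0)"
abbreviation ones :: "nat \<Rightarrow> nat" where "ones \<equiv> (\<lambda>_. 1)"

lemma zeros_Omega [simp]: "zeros \<in> Omega M" and ones_Omega [simp]: "ones \<in> Omega 1"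
  by (auto simp: Omega_def)

lemma expand_prefix:
  assumes "incrementable M c" "z 0 = 0" "j < length c"
  shows "expand M c 0 z j = c ! j"
  using block_expand[OF assms(1), of 0 z 0] block_nth[OF assms(3), of "expand M c 0 z" 0] assms(2)
  by (simp add: edge_word_def)

lemma incrementable_binary_last: "incrementable 1 b \<Longrightarrow> b ! (length b - 1) = 0"
  unfolding incrementable_def by (auto simp: last_conv_nth)

lemma edge_word_binary_last:
  "incrementable 1 b \<Longrightarrow> u \<le> 1 \<Longrightarrow> v \<le> 1 \<Longrightarrow>
    edge_word 1 b u v ! (length b - 1) = v"
  using incrementable_binary_last[of b] incrementable_nonempty[of 1 b]
  by (auto simp: edge_word_def wplus_nth)

lemma prev_bit_expand_binary:
  assumes b: "incrementable 1 b" and z: "z \<in> Omega 1" "s \<le> 1"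
  shows "prev_bit s (expand 1 b s z) (k * length b) = prev_bit s z k"
proof (cases k)
  case (Suc k')
  let ?n = "length b"
  have n: "0 < ?n" by (rule incrementable_length_pos[OF b])
  have "k * ?n - 1 = k' * ?n + (?n - 1)" using n Suc by (cases ?n) (auto simp: algebra_simps)
  then have "expand 1 b s z (k * ?n - 1) = block ?n (expand 1 b s z) k' ! (?n - 1)"
    using block_nth[of "?n - 1" ?n _ k'] n by simp
  also have "\<dots> = z k'" unfolding block_expand[OF b]
    using prev_bit_le[OF z(2) z(1), of k'] binary_le_one[OF z(1), of k'] by (rule edge_word_binary_last[OF b])
  finally show ?thesis using Suc n by (simp add: prev_bit_def)
qed simp

lemma seg_expand_cong:
  assumes "incrementable M a" "\<forall>j<k. Y j = Y' j"
  shows "seg (expand M a s Y) 0 (k * length a) = seg (expand M a s Y') 0 (k * length a)"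
proof (rule nth_equalityI)
  fix i assume "i < length (seg (expand M a s Y) 0 (k * length a))"
  then have "i div length a < k"
    using incrementable_length_pos[OF assms(1)] by (simp add: div_less_iff_less_mult)
  moreover have "prev_bit s Y t = prev_bit s Y' t" if "t < k" for t
    using that assms(2) by (simp add: prev_bit_def)
  ultimately show "seg (expand M a s Y) 0 (k * length a) ! i = seg (expand M a s Y') 0 (k * length a) ! i"
    using assms(2) \<open>i < _\<close> by (simp add: expand_def)
qed simp

lemma seg_expand_fun_upd:
  assumes a: "incrementable M a" and Y: "Y k = 1"
  shows "seg (expand M a s Y) 0 (Suc k * length a) = wplus (seg (expand M a s (Y(k := 0))) 0 (Suc k * length a))"
proof -
  let ?m = "length a" and ?Y' = "Y(k := 0)"
  have prev: "prev_bit s Y k = prev_bit s ?Y' k" by (cases k) simp_all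
  have len: "Suc k * ?m = k * ?m + ?m" by simp
  have "seg (expand M a s Y) 0 (Suc k * ?m) = seg (expand M a s Y) 0 (k * ?m) @ block ?m (expand M a s Y) k"
    unfolding len by (simp add: block_def seg_append)
  also have "seg (expand M a s Y) 0 (k * ?m) = seg (expand M a s ?Y') 0 (k * ?m)"
    by (rule seg_expand_cong[OF a]) simp
  also have "block ?m (expand M a s Y) k = wplus (block ?m (expand M a s ?Y') k)"
    using Y prev by (simp add: block_expand[OF a] wplus_edge_word[OF a])
  also have "seg (expand M a s ?Y') 0 (k * ?m) @ \<dots> = wplus (seg (expand M a s ?Y') 0 (Suc k * ?m))"
    using incrementable_length_pos[OF a] unfolding len by (simp add: wplus_append block_def seg_append)
  finally show ?thesis .
qed

context
  fixes M :: nat and a b :: "nat list"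
  assumes a: "incrementable M a" and b: "incrementable 1 b" and b0: "b ! 0 = 1"
begin

lemma comp_eq_seg:
  assumes "Y \<in> Omega 1" "\<forall>j<length b. Y j = b ! j"
  shows "comp M a b = seg (expand M a 0 Y) 0 (length a * length b)"
  using comp_eq_seg_expand[OF a incrementable_nonempty[OF b] assms] assms b0
    incrementable_length_pos[OF b] by auto

lemma comp_eq_seg_zeros: "comp M a b = seg (expand M a 0 (expand 1 b 0 zeros)) 0 (length a * length b)"
  using comp_eq_seg expand_Omega[OF b] expand_prefix[OF b] by simp

lemma length_comp: "length (comp M a b) = length a * length b"
  by (simp add: comp_eq_seg_zeros)

lemma incrementable_comp: "incrementable M (comp M a b)"
proof -
  let ?ab = "comp M a b" and ?m = "length a" and ?n = "length b" and ?Y = "expand 1 b 0 zeros"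
  have mn: "0 < ?m" "0 < ?n" using incrementable_length_pos[OF a] incrementable_length_pos[OF b] by auto
  have ne: "?ab \<noteq> []" using length_comp mn by auto
  have le: "\<forall>x\<in>set ?ab. x \<le> M" using comp_eq_seg_zeros expand_Omega[OF a]
    by (auto simp: seg_def Omega_def)
  have "last ?ab = expand M a 0 ?Y ((?n - 1) * ?m + (?m - 1))"
  proof -
    have idx: "?m * ?n - 1 = (?n - 1) * ?m + (?m - 1)" using mn by (cases ?n; cases ?m) (auto simp: algebra_simps)
    have "last ?ab = ?ab ! (?m * ?n - 1)" using ne length_comp by (simp add: last_conv_nth)
    also have "\<dots> = expand M a 0 ?Y (?m * ?n - 1)"
      using mn by (subst comp_eq_seg_zeros) simp
    finally show ?thesis unfolding idx .
  qed
  also have "\<dots> = block ?m (expand M a 0 ?Y) (?n - 1) ! (?m - 1)"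
    by (rule block_nth[symmetric]) (use mn in simp)
  also have "\<dots> = edge_word M a (prev_bit 0 ?Y (?n - 1)) (?Y (?n - 1)) ! (?m - 1)"
    by (simp add: block_expand[OF a])
  also have "?Y (?n - 1) = 0"
    using expand_prefix[OF b, of zeros "?n - 1"] incrementable_binary_last[OF b] mn by simp
  finally have "last ?ab = edge_word M a (prev_bit 0 ?Y (?n - 1)) 0 ! (?m - 1)" .
  moreover have "a ! (?m - 1) < M" using a unfolding incrementable_def by (auto simp: last_conv_nth)
  ultimately have "last ?ab < M" using mn by (auto simp: edge_word_def wplus_nth)
  then show ?thesis using ne le by (simp add: incrementable_def)
qed

lemma comp_first_ge_1: "a ! 0 \<ge> 1 \<Longrightarrow> comp M a b ! 0 \<ge> 1"
proof -
  assume a0: "a ! 0 \<ge> 1"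
  have mn: "0 < length a" "0 < length b" using incrementable_length_pos[OF a]
    incrementable_length_pos[OF b] by auto
  have "comp M a b ! 0 = expand M a 0 (expand 1 b 0 zeros) 0" using comp_eq_seg_zeros mn by simp
  also have "\<dots> = wplus a ! 0"
    using expand_prefix[OF b, of zeros 0] b0 mn by (simp add: expand_def edge_word_def)
  finally show ?thesis using a0 mn by (auto simp: wplus_nth)
qed

lemma seg_expand_expand0:
  assumes z: "z \<in> Omega 1"
  shows "seg (expand M a 0 (expand 1 b 0 z)) 0 (length a * length b) = edge_word M (comp M a b) 0 (z 0)"
proof (cases "z 0 = 0")
  case True
  then have "\<forall>j<length b. expand 1 b 0 z j = b ! j" using expand_prefix[OF b, of z] by blast
  then show ?thesis using comp_eq_seg[OF expand_Omega[OF b]] True by (simp add: edge_word_def)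
next
  case False
  then have z0: "z 0 = 1" using binary_cases[OF z, of 0] by auto
  let ?n = "length b" and ?Y = "expand 1 b 0 z"
  have n: "0 < ?n" by (rule incrementable_length_pos[OF b])
  have Y: "j < ?n \<Longrightarrow> ?Y j = wplus b ! j" for j
    using block_expand[OF b, of 0 z 0] block_nth[of j ?n ?Y 0] z0 by (simp add: edge_word_def)
  then have "?Y (?n - 1) = 1"
    using incrementable_binary_last[OF b] incrementable_nonempty[OF b] n by (simp add: wplus_nth)
  moreover have "Suc (?n - 1) * length a = length a * ?n" using n by simp
  ultimately have "seg (expand M a 0 ?Y) 0 (length a * ?n) =
      wplus (seg (expand M a 0 (?Y(?n - 1 := 0))) 0 (length a * ?n))"
    using seg_expand_fun_upd[OF a, of ?Y "?n - 1" 0] by simp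
  moreover have "comp M a b = seg (expand M a 0 (?Y(?n - 1 := 0))) 0 (length a * ?n)"
  proof (rule comp_eq_seg)
    show "?Y(?n - 1 := 0) \<in> Omega 1" using expand_Omega[OF b] by (auto simp: Omega_def)
    show "\<forall>j<?n. (?Y(?n - 1 := 0)) j = b ! j"
      using Y incrementable_binary_last[OF b] incrementable_nonempty[OF b] by (auto simp: wplus_nth)
  qed
  ultimately show ?thesis using z0 n by (simp add: edge_word_def mult.commute)
qed

lemma seg_expand_expand:
  assumes z: "z \<in> Omega 1" and u: "u \<le> 1"
  shows "seg (expand M a u (expand 1 b u z)) 0 (length a * length b) = edge_word M (comp M a b) u (z 0)"
proof (cases "u = 0")
  case True then show ?thesis using seg_expand_expand0[OF z] by simp
next
  case False
  then have u1: "u = 1" using u by auto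
  define w where "w = expand 1 b 0 (srefl 1 z)"
  have wO: "w \<in> Omega 1" unfolding w_def by (rule expand_Omega[OF b])
  have "srefl 1 w = expand 1 b 1 z"
    unfolding w_def using srefl_expand[OF b srefl_Omega, of 0 z] srefl_srefl[OF z] by simp
  then have "expand M a 1 (expand 1 b 1 z) = srefl M (expand M a 0 w)"
    using srefl_expand[OF a wO, of 0] by simp
  then have "seg (expand M a u (expand 1 b u z)) 0 (length a * length b) =
      wrefl M (edge_word M (comp M a b) 0 (srefl 1 z 0))"
    using seg_expand_expand0[OF srefl_Omega[of 1 z]] u1 by (simp add: seg_srefl w_def)
  also have "\<dots> = edge_word M (comp M a b) 1 (z 0)"
    using binary_cases[OF z, of 0] by (auto simp: srefl_def edge_word_def)
  finally show ?thesis using u1 by simp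
qed

lemma expand_comp:
  assumes z: "z \<in> Omega 1"
  shows "expand M (comp M a b) 0 z = expand M a 0 (expand 1 b 0 z)"
proof (rule block_ext)
  let ?m = "length a" and ?n = "length b" and ?ab = "comp M a b" and ?Y = "expand 1 b 0 z"
  show "0 < ?m * ?n" using incrementable_length_pos[OF a] incrementable_length_pos[OF b] by auto
  fix K
  have "shift ((K * ?n) * ?m) (expand M a 0 ?Y) = expand M a (prev_bit 0 ?Y (K * ?n)) (shift (K * ?n) ?Y)"
    by (rule shift_expand[OF a])
  also have "prev_bit 0 ?Y (K * ?n) = prev_bit 0 z K" by (rule prev_bit_expand_binary[OF b z]) simp
  also have "shift (K * ?n) ?Y = expand 1 b (prev_bit 0 z K) (shift K z)" by (rule shift_expand[OF b])
  finally have shift_Y: "shift ((K * ?n) * ?m) (expand M a 0 ?Y) =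
      expand M a (prev_bit 0 z K) (expand 1 b (prev_bit 0 z K) (shift K z))" .
  have "block (?m * ?n) (expand M a 0 ?Y) K = seg (shift ((K * ?n) * ?m) (expand M a 0 ?Y)) 0 (?m * ?n)"
    by (simp add: block_def seg_shift algebra_simps)
  also have "\<dots> = seg (expand M a (prev_bit 0 z K) (expand 1 b (prev_bit 0 z K) (shift K z))) 0 (?m * ?n)"
    unfolding shift_Y ..
  also have "\<dots> = edge_word M ?ab (prev_bit 0 z K) (z K)"
    using seg_expand_expand[OF shift_Omega[OF z] prev_bit_le[OF _ z]] by (simp add: shift_def)
  also have "\<dots> = block (?m * ?n) (expand M ?ab 0 z) K"
    using block_expand[OF incrementable_comp, of 0 z K] length_comp by simp
  finally show "block (?m * ?n) (expand M ?ab 0 z) K = block (?m * ?n) (expand M a 0 ?Y) K" ..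
qed

end


section \<open>Fundamental words\<close>

definition fundamental :: "nat \<Rightarrow> nat list \<Rightarrow> bool" where
  "fundamental M c \<longleftrightarrow> incrementable M c \<and> 1 \<le> c ! 0 \<and>
    wlex_less (wrefl M c) (wplus c) \<and>
     (\<forall>i. 0 < i \<and> i < length c \<longrightarrow> wlex_less (drop i c) (take (length c - i) c) \<and>
          wlex_le (wrefl M (take (length c - i) c)) (drop i c))"

lemma drop_length_minus_one: "c \<noteq> [] \<Longrightarrow> drop (length c - 1) c = [c ! (length c - 1)]"
  by (metis One_nat_def append_butlast_last_id append_eq_conv_conj last_conv_nth length_butlast)

lemma take_one: "c \<noteq> [] \<Longrightarrow> take 1 c = [c ! 0]"
  by (cases c) auto

lemma wlex_less_singleton: "wlex_less [x] [y] \<longleftrightarrow> x < y" by (auto simp: wlex_less_def)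

lemma Fund_imp_fundamental:
  assumes M: "M \<ge> 1" and c: "c \<in> Fund M"
  shows "fundamental M c"
proof -
  have le: "\<forall>x\<in>set c. x \<le> M" using c by (auto simp: Fund_def)
  let ?m = "length c"
  from c consider
    (long) "?m \<ge> 2" "\<forall>i. 1 \<le> i \<and> i < ?m \<longrightarrow>
      wle (wrefl M (take (?m - i) c)) (drop i c) \<and> wless (drop i c) (take (?m - i) c)"
  | (single) "M \<ge> 2" "?m = 1" "M - hd c \<le> hd c" "hd c < M"
    unfolding Fund_def by blast
  then show ?thesis
  proof cases
    case long
    have cond: "wlex_le (wrefl M (take (?m - i) c)) (drop i c) \<and> wlex_less (drop i c) (take (?m - i) c)"
      if "0 < i" "i < ?m" for i
      using long(2)[rule_format, of i] that wle_iff_wlex_le[of "wrefl M (take (?m - i) c)" "drop i c"]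
        wless_iff_wlex_less[of "drop i c" "take (?m - i) c"] by auto
    have ne: "c \<noteq> []" using long by auto
    have c1: "?m - (?m - 1) = 1" using long by auto
    have X: "wlex_le [M - c ! 0] [c ! (?m - 1)] \<and> wlex_less [c ! (?m - 1)] [c ! 0]"
      using cond[of "?m - 1"] long ne c1 drop_length_minus_one[OF ne] take_one[OF ne] by (simp add: wrefl_def)
    then have x1: "c ! (?m - 1) < c ! 0" "M - c ! 0 \<le> c ! (?m - 1)" by (auto simp: wlex_less_singleton)
    have c0M: "c ! 0 \<le> M" using le ne by (auto simp: nth_mem)
    have "c ! (?m - 1) < M" using x1(1) c0M by linarith
    then have ok: "incrementable M c" using ne le by (auto simp: incrementable_def last_conv_nth)
    have "wlex_less (wrefl M c) (wplus c)" unfolding wlex_less_def using ne long x1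
      by (intro exI[of _ 0]) (auto simp: wplus_nth)
    then show ?thesis using ok x1 cond unfolding fundamental_def by auto
  next
    case single
    then obtain x where cx: "c = [x]" by (cases c) auto
    have "incrementable M c" using single cx by (auto simp: incrementable_def)
    moreover have "wlex_less (wrefl M c) (wplus c)" using single cx
      by (auto simp: wlex_less_def wplus_def wrefl_def)
    ultimately show ?thesis using single cx unfolding fundamental_def by auto
  qed
qed

lemma Fund_one:
  assumes "b \<in> Fund 1"
  shows "fundamental 1 b" "b ! 0 = 1"
proof -
  show f: "fundamental 1 b" using Fund_imp_fundamental[OF _ assms] by simp
  then have "b ! 0 \<le> 1" "1 \<le> b ! 0" unfolding fundamental_def incrementable_def by (auto simp: nth_mem)
  then show "b ! 0 = 1" by simp
qed

lemma drop_seg: "i \<le> l \<Longrightarrow> drop i (seg x p l) = seg x (p + i) (l - i)"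
  by (rule nth_equalityI) (auto simp: add.assoc)

lemma take_seg: "i \<le> l \<Longrightarrow> take i (seg x p l) = seg x p i"
  by (rule nth_equalityI) auto

context
  fixes M :: nat and c :: "nat list"
  assumes fwc: "fundamental M c"
begin

lemma fundamental_incrementable: "incrementable M c" using fwc by (simp add: fundamental_def)
lemma fundamental_nonempty: "c \<noteq> []" using fundamental_incrementable by (simp add: incrementable_def)
lemma fundamental_last_less: "last c < M" using fundamental_incrementable by (simp add: incrementable_def)
lemma fundamental_le: "\<forall>x\<in>set c. x \<le> M" using fundamental_incrementable
  by (simp add: incrementable_def)
lemma fundamental_drop_take: "0 < i \<Longrightarrow> i < length c \<Longrightarrow>
  wlex_less (drop i c) (take (length c - i) c) \<and>
          wlex_le (wrefl M (take (length c - i) c)) (drop i c)"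
  using fwc by (simp add: fundamental_def)
lemma fundamental_wrefl_less_wplus: "wlex_less (wrefl M c) (wplus c)" using fwc by (simp add: fundamental_def)
lemma fundamental_first_ge_1: "1 \<le> c ! 0" using fwc by (simp add: fundamental_def)
lemma fundamental_M_pos: "1 \<le> M" using fundamental_last_less by linarith
lemmas fundamental_length_edge_word[simp] = length_edge_word[OF fundamental_incrementable]
lemma fundamental_length_pos: "0 < length c" using fundamental_incrementable by (simp add: incrementable_def)
lemma fundamental_less_wplus: "wlex_less c (wplus c)"
  using wlex_less_wplus fundamental_incrementable by (simp add: incrementable_def)
lemma fundamental_wrefl_wplus_less: "wlex_less (wrefl M (wplus c)) (wrefl M c)"
  using wrefl_wplus_less fundamental_incrementable by (simp add: incrementable_def)

lemma edge_word_A_less_wplus: "wlex_less (edge_word M c 1 v) (wplus c)"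
proof -
  have "wlex_less (wrefl M (wplus c)) (wplus c)"
    using wlex_less_trans[OF _ wrefl_wplus_less[OF fundamental_nonempty fundamental_last_less]
      fundamental_wrefl_less_wplus] fundamental_nonempty by simp
  then show ?thesis using fundamental_wrefl_less_wplus by (simp add: edge_word_def)
qed

lemma take_edge_word_A_less:
  assumes i: "0 < i" "i < length c"
  shows "wlex_less (take i (edge_word M c 1 v)) (wplus (drop (length c - i) c))"
proof -
  let ?m = "length c"
  have mi: "0 < ?m - i" "?m - i < ?m" "?m - (?m - i) = i" using i by auto
  have "take i (edge_word M c 1 v) = wrefl M (take i c)"
    using i fundamental_nonempty by (auto simp: edge_word_def wrefl_take[symmetric] take_wplus)
  moreover have "wlex_le (wrefl M (take i c)) (drop (?m - i) c)"
    using fundamental_drop_take[OF mi(1,2)] mi(3) by simp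
  moreover have "wlex_less (drop (?m - i) c) (wplus (drop (?m - i) c))"
    using i by (intro wlex_less_wplus) simp
  ultimately show ?thesis using wlex_le_less_trans[of "wrefl M (take i c)" "drop (?m - i) c"] i by simp
qed

lemma wrefl_drop_le_take:
  assumes i: "0 < i" "i < length c"
  shows "wlex_le (wrefl M (drop i c)) (take (length c - i) c)"
proof -
  have dle: "\<forall>x\<in>set (drop i c). x \<le> M" using fundamental_le by (auto dest: in_set_dropD)
  have tle: "\<forall>x\<in>set (take (length c - i) c). x \<le> M" using fundamental_le
    by (auto dest: in_set_takeD)
  show ?thesis
    using wlex_le_wrefl[OF _ wrefl_le dle fundamental_drop_take[OF i, THEN conjunct2]]
      wrefl_wrefl[OF tle] wrefl_wrefl[OF dle] i by auto
qed

text \<open>A window of length $|c|$ straddling two consecutive blocks of \<^term>\<open>expand M c 0 y\<close>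
  lies below $c^+$; here the inequalities defining fundamental words are used.\<close>

lemma shift_block_less_wplus:
  assumes i: "0 < i" "i < length c" and v: "v \<le> 1"
  shows "wlex_less (drop i (edge_word M c u v) @ take i (edge_word M c v v')) (wplus c)"
proof -
  let ?m = "length c"
  have "wplus c = take (?m - i) (wplus c) @ drop (?m - i) (wplus c)" by simp
  then have wp: "wplus c = take (?m - i) c @ wplus (drop (?m - i) c)"
    using i by (simp add: take_wplus drop_wplus)
  have cont: "wlex_less (take i (edge_word M c 1 v')) (wplus (drop (?m - i) c))"
    by (rule take_edge_word_A_less[OF i])
  have F: "wlex_less (drop i c) (take (?m - i) c)" using fundamental_drop_take[OF i] by auto
  have F2: "wlex_le (wrefl M (drop i c)) (take (?m - i) c)" by (rule wrefl_drop_le_take[OF i])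
  have len: "length (drop i (edge_word M c u v)) = length (take (?m - i) c)" using i by simp
  have dilast: "drop i c \<noteq> []" "last (drop i c) < M" using i fundamental_last_less by auto
  consider "u = 0" "v = 0" | "u = 0" "v = 1" | "u \<noteq> 0" "v = 0" | "u \<noteq> 0" "v = 1" using v by linarith
  then show ?thesis
  proof cases
    case 1
    then show ?thesis unfolding wp using F len by (subst wlex_less_append) (auto simp: edge_word_def)
  next
    case 2
    have "wplus (drop i c) = take (?m - i) c \<or> wlex_less (wplus (drop i c)) (take (?m - i) c)"
      using wlex_less_imp_wplus_le[OF _ _ F] i by simp
    then show ?thesis unfolding wp using 2 cont len i
      by (subst wlex_less_append) (auto simp: edge_word_def drop_wplus)
  next
    case 3
    have "wlex_less (wrefl M (wplus (drop i c))) (wrefl M (drop i c))" by (rule wrefl_wplus_less[OF dilast])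
    then have "wlex_less (wrefl M (wplus (drop i c))) (take (?m - i) c)"
      using wlex_less_le_trans[OF _ _ F2] dilast(1) by simp
    then show ?thesis unfolding wp using 3 len i
      by (subst wlex_less_append) (auto simp: edge_word_def drop_wplus wrefl_drop[symmetric])
  next
    case 4
    then show ?thesis unfolding wp using cont len i F2
      by (subst wlex_less_append) (auto simp: edge_word_def wrefl_drop[symmetric])
  qed
qed

lemma shift_expand_blocks_le:
  assumes y: "y \<in> Omega 1" "y 0 = 1" and sh: "\<And>k. lex_le (shift k y) y"
  shows "lex_le (shift (k * length c) (expand M c 0 y)) (expand M c 0 y)"
proof (cases "prev_bit 0 y k = 0")
  case True
  then show ?thesis
    using shift_expand[OF fundamental_incrementable] expand_lex_le_iff[OF fundamental_incrementable
      shift_Omega[OF y(1)] y(1)] sh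
    by simp
next
  case False
  then have "prev_bit 0 y k = 1" using prev_bit_le[of 0 y k] y by auto
  then have "block (length c) (shift (k * length c) (expand M c 0 y)) 0 = edge_word M c 1 (y k)"
    using shift_expand[OF fundamental_incrementable] block_expand[OF fundamental_incrementable, of 1 "shift k y" 0]
    by (simp add: shift_def)
  moreover have "block (length c) (expand M c 0 y) 0 = wplus c"
    using block_expand[OF fundamental_incrementable, of 0 y 0] y by (simp add: edge_word_def)
  ultimately have "wlex_less (block (length c) (shift (k * length c) (expand M c 0 y)) 0)
      (block (length c) (expand M c 0 y) 0)"
    using edge_word_A_less_wplus by simp
  then have "lex_less (shift (k * length c) (expand M c 0 y)) (expand M c 0 y)"
    by (intro block_less_imp_lex_less[OF fundamental_length_pos, of 0]) simp_all
  then show ?thesis by (rule lex_less_imp_le)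
qed

lemma shift_expand_inner_less:
  assumes y: "y \<in> Omega 1" "y 0 = 1" and i: "0 < i" "i < length c"
  shows "lex_less (shift (k * length c + i) (expand M c 0 y)) (expand M c 0 y)"
proof -
  let ?m = "length c" and ?x = "expand M c 0 y" and ?n = "k * length c + i"
  have "seg (shift ?n ?x) 0 ?m = seg ?x ?n ?m" by (simp add: seg_shift)
  also have "\<dots> = seg ?x ?n (?m - i) @ seg ?x (?n + (?m - i)) i"
    using seg_append[of ?x ?n "?m - i" i] i by simp
  also have "seg ?x ?n (?m - i) = drop i (block ?m ?x k)"
    unfolding block_def using i by (simp add: drop_seg)
  also have "seg ?x (?n + (?m - i)) i = take i (block ?m ?x (Suc k))"
    unfolding block_def using i by (simp add: take_seg algebra_simps)
  finally have sg: "seg (shift ?n ?x) 0 ?m = drop i (block ?m ?x k) @ take i (block ?m ?x (Suc k))" .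
  have "block ?m ?x 0 = wplus c"
    using block_expand[OF fundamental_incrementable, of 0 y 0] y by (simp add: edge_word_def)
  then have b0: "seg ?x 0 ?m = wplus c" by (simp add: block_def)
  have "wlex_less (seg (shift ?n ?x) 0 ?m) (seg ?x 0 ?m)"
    unfolding sg block_expand[OF fundamental_incrementable] b0
    using shift_block_less_wplus[OF i binary_le_one[OF y(1), of k], of "prev_bit 0 y k" "y (Suc k)"]
    by (simp add: block_def)
  then show ?thesis using seg_less_imp_lex_less[of 0] by blast
qed

lemma expand_shift_le:
  assumes y: "y \<in> Omega 1" "y 0 = 1" and sh: "\<And>k. lex_le (shift k y) y"
  shows "lex_le (shift n (expand M c 0 y)) (expand M c 0 y)"
proof -
  have n: "n = (n div length c) * length c + n mod length c" by simp
  show ?thesis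
  proof (cases "n mod length c = 0")
    case True
    then show ?thesis using shift_expand_blocks_le[OF y sh, of "n div length c"] n by simp
  next
    case False
    then show ?thesis
      using shift_expand_inner_less[OF y, of "n mod length c" "n div length c"] fundamental_length_pos n
      by (simp add: lex_less_imp_le)
  qed
qed

end


section \<open>Binary sequences in $\mathbf V$\<close>

lemma shift_le_of_ones_prefix:
  assumes y: "y \<in> Omega 1" and p: "\<forall>j<n. y j = 1"
  shows "lex_le (shift n y) y"
proof (cases "\<forall>j. y j = 1")
  case True
  then have "shift n y = y" by (auto simp: shift_def)
  then show ?thesis by simp
next
  case False
  then obtain j0 where "y j0 \<noteq> 1" by auto
  define r where "r = (LEAST j. y j \<noteq> 1)"
  have r1: "y r \<noteq> 1" unfolding r_def by (rule LeastI[of _ j0]) fact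
  have r2: "\<forall>i<r. y i = 1" unfolding r_def using not_less_Least by blast
  have yr: "y r = 0" using r1 binary_cases[OF y, of r] by auto
  have rn: "n \<le> r" using p r1 by (meson not_le)
  show ?thesis
  proof (cases "n = 0")
    case True then show ?thesis by simp
  next
    case False
    show ?thesis unfolding lex_le_def lex_less_def
    proof (intro disjI2 exI[of _ "r - n"] conjI allI impI)
      fix i assume "i < r - n"
      then show "shift n y i = y i" using r2 by (simp add: shift_def)
    next
      show "shift n y (r - n) < y (r - n)" using rn False r2 yr by (simp add: shift_def)
    qed
  qed
qed

lemma lex_le_ones_prefix:
  assumes le: "lex_le w y" and y: "y \<in> Omega 1" and w: "\<forall>j\<le>l. w j = 1"
  shows "\<forall>j\<le>l. y j = 1"
proof (rule ccontr)
  assume "\<not> (\<forall>j\<le>l. y j = 1)"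
  then obtain j0 where j0: "j0 \<le> l" "y j0 \<noteq> 1" by auto
  define t where "t = (LEAST j. y j \<noteq> 1)"
  have t1: "y t \<noteq> 1" unfolding t_def by (rule LeastI[of _ j0]) (use j0 in auto)
  have t2: "\<forall>i<t. y i = 1" unfolding t_def using not_less_Least by blast
  have tl: "t \<le> l" unfolding t_def using j0 Least_le[of "\<lambda>j. y j \<noteq> 1" j0] by auto
  have "lex_less y w" unfolding lex_less_def
    using t1 t2 tl w binary_cases[OF y, of t] by (intro exI[of _ t]) auto
  then show False using le not_lex_le_iff by blast
qed

lemma exists_run_start:
  fixes n :: nat and y :: "nat \<Rightarrow> nat"
  shows "\<exists>i\<le>n. (i = 0 \<or> y (i - 1) \<noteq> y n) \<and> (\<forall>j. i \<le> j \<and>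
    j \<le> n \<longrightarrow> y j = y n)"
proof (induction n)
  case 0 then show ?case by auto
next
  case (Suc n)
  show ?case
  proof (cases "y n = y (Suc n)")
    case True
    then obtain i where "i \<le> n" "i = 0 \<or> y (i - 1) \<noteq> y n"
      "\<forall>j. i \<le> j \<and> j \<le> n \<longrightarrow> y j = y n"
      using Suc by blast
    then show ?thesis using True by (intro exI[of _ i]) (auto simp: le_Suc_eq)
  next
    case False
    then show ?thesis by (intro exI[of _ "Suc n"]) auto
  qed
qed

lemma shift_srefl: "shift n (srefl M y) = srefl M (shift n y)"
  by (auto simp: shift_def srefl_def)

lemma lex_le_shift_ones_prefix:
  assumes le: "lex_le w y" and y: "y \<in> Omega 1" and w: "\<forall>j\<le>l. w j = 1"
  shows "lex_le (shift l w) (shift l y)"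
proof -
  have "\<forall>j\<le>l. y j = 1" by (rule lex_le_ones_prefix[OF le y w])
  then have "\<forall>j<l. w j = y j" using w by auto
  then show ?thesis by (rule lex_le_shift_common_prefix[OF le])
qed

text \<open>For a binary sequence starting with 1 the conditions defining $\mathbf V$ need only be checked
  after each 0 (for the shifts) and after each 1 (for the reflected shifts): a shift starting
  inside a run is compared with the shift at the start of that run.\<close>

lemma binary_shift_le:
  assumes y: "y \<in> Omega 1" "y 0 = 1"
    and a: "\<And>k. y k = 0 \<Longrightarrow> lex_le (shift (Suc k) y) y"
  shows "lex_le (shift n y) y"
proof (induction n rule: less_induct)
  case (less n)
  show ?case
  proof (cases "y n = 0")
    case True
    then have "lex_less (shift n y) y" using y by (auto simp: lex_less_def shift_def intro!: exI[of _ 0])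
    then show ?thesis by (rule lex_less_imp_le)
  next
    case False
    then have yn: "y n = 1" using binary_cases[OF y(1), of n] by auto
    obtain i where i: "i \<le> n" "i = 0 \<or> y (i - 1) \<noteq> y n"
      "\<forall>j. i \<le> j \<and> j \<le> n \<longrightarrow> y j = y n"
      using exists_run_start by blast
    show ?thesis
    proof (cases "i = 0")
      case True
      then show ?thesis using i yn by (intro shift_le_of_ones_prefix[OF y(1)]) auto
    next
      case False
      then have "y (i - 1) = 0" using i yn binary_cases[OF y(1), of "i - 1"] by auto
      then have li: "lex_le (shift i y) y" using a[of "i - 1"] False by simp
      have "lex_le (shift (n - i) (shift i y)) (shift (n - i) y)"
        by (rule lex_le_shift_ones_prefix[OF li y(1)]) (use i yn in \<open>auto simp: shift_def\<close>)
      moreover have "shift (n - i) (shift i y) = shift n y" using i(1) by simp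
      moreover have "lex_le (shift (n - i) y) y" using False i(1) by (intro less) auto
      ultimately show ?thesis using lex_le_trans by metis
    qed
  qed
qed

lemma binary_srefl_le_shift:
  assumes y: "y \<in> Omega 1" "y 0 = 1"
    and a: "\<And>k. y k = 0 \<Longrightarrow> lex_le (shift (Suc k) y) y"
    and b: "\<And>k. y k = 1 \<Longrightarrow> lex_le (srefl 1 (shift (Suc k) y)) y"
  shows "lex_le (srefl 1 y) (shift n y)"
proof (cases "y n = 1")
  case True
  then have "lex_less (srefl 1 y) (shift n y)" using y
    by (auto simp: lex_less_def shift_def srefl_def intro!: exI[of _ 0])
  then show ?thesis by (rule lex_less_imp_le)
next
  case False
  then have yn: "y n = 0" using binary_cases[OF y(1), of n] by auto
  obtain i where i: "i \<le> n" "i = 0 \<or> y (i - 1) \<noteq> y n"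
    "\<forall>j. i \<le> j \<and> j \<le> n \<longrightarrow> y j = y n"
    using exists_run_start by blast
  have i0: "i \<noteq> 0" using i yn y by auto
  then have "y (i - 1) = 1" using i yn binary_cases[OF y(1), of "i - 1"] by auto
  then have li: "lex_le (srefl 1 (shift i y)) y" using b[of "i - 1"] i0 by simp
  have "lex_le (shift (n - i) (srefl 1 (shift i y))) (shift (n - i) y)"
    by (rule lex_le_shift_ones_prefix[OF li y(1)]) (use i yn in \<open>auto simp: shift_def srefl_def\<close>)
  moreover have "shift (n - i) (srefl 1 (shift i y)) = srefl 1 (shift n y)"
    using i(1) by (simp add: shift_srefl)
  ultimately have "lex_le (srefl 1 (shift n y)) y" using binary_shift_le[OF y a] lex_le_trans by metis
  then show ?thesis
    using lex_le_srefl[OF srefl_Omega y(1)] srefl_srefl[OF shift_Omega[OF y(1)]] by metis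
qed

lemma Vseq_inf_nonzero:
  assumes M: "M \<ge> 1" and d: "d \<in> Vseq M"
  shows "inf_nonzero d"
proof (rule ccontr)
  assume "\<not> inf_nonzero d"
  then obtain N where N: "\<And>n. n \<ge> N \<Longrightarrow> d n = 0" unfolding inf_nonzero_def by auto
  have "lex_le (srefl M d) (shift N d)" using d by (auto simp: Vseq_def)
  moreover have "shift N d = (\<lambda>_. 0)" using N by (auto simp: shift_def)
  ultimately have "srefl M d = (\<lambda>_. 0)" by (auto simp: lex_le_def lex_less_def)
  then have "M - d N = 0" by (metis srefl_def)
  then show False using N[of N] M by simp
qed

lemma Vseq_expand_imp_Vseq:
  assumes ok: "incrementable M c" and y: "y \<in> Omega 1" "y 0 = 1" and xV: "expand M c 0 y \<in> Vseq M"
  shows "y \<in> Vseq 1"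
proof -
  let ?x = "expand M c 0 y" and ?m = "length c"
  have V: "lex_le (srefl M ?x) (shift n ?x)" "lex_le (shift n ?x) ?x" for n
    using xV by (auto simp: Vseq_def)
  have a: "lex_le (shift (Suc k) y) y" if "y k = 0" for k
  proof -
    have "shift (Suc k * ?m) ?x = expand M c 0 (shift (Suc k) y)"
      using shift_expand[OF ok, of "Suc k" 0 y] that by simp
    then show ?thesis using V(2)[of "Suc k * ?m"] expand_lex_le_iff[OF ok shift_Omega[OF y(1)] y(1)] by simp
  qed
  have b: "lex_le (srefl 1 (shift (Suc k) y)) y" if "y k = 1" for k
  proof -
    let ?w = "shift (Suc k) y"
    have wO: "?w \<in> Omega 1" by (rule shift_Omega[OF y(1)])
    have "shift (Suc k * ?m) ?x = expand M c 1 ?w" using shift_expand[OF ok, of "Suc k" 0 y] that by simp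
    also have "expand M c 1 ?w = srefl M (expand M c 0 (srefl 1 ?w))"
    proof -
      have "srefl M (expand M c 0 (srefl 1 ?w)) = expand M c (1 - 0) (srefl 1 (srefl 1 ?w))"
        by (rule srefl_expand[OF ok srefl_Omega]) simp
      then show ?thesis using srefl_srefl[OF wO] by simp
    qed
    finally have "lex_le (srefl M ?x) (srefl M (expand M c 0 (srefl 1 ?w)))" using V(1) by metis
    then have "lex_le (expand M c 0 (srefl 1 ?w)) ?x"
      using lex_le_srefl_iff[OF expand_Omega[OF ok] expand_Omega[OF ok]] by blast
    then show ?thesis using expand_lex_le_iff[OF ok srefl_Omega y(1)] by simp
  qed
  show ?thesis unfolding Vseq_def
    using y binary_shift_le[OF y a] binary_srefl_le_shift[OF y a b] by auto
qed


section \<open>Sequences of $\mathbf V$ between $c^\infty$ and $c^+\overline c^\infty$\<close>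

lemma edge_word_simps[simp]: "edge_word M c 0 0 = c" "edge_word M c 0 1 = wplus c"
  "edge_word M c 1 0 = wrefl M (wplus c)" "edge_word M c 1 1 = wrefl M c"
  "edge_word M c 0 (Suc v) = wplus c" "edge_word M c (Suc u) 0 = wrefl M (wplus c)"
    "edge_word M c (Suc u) (Suc v) = wrefl M c"
  by (auto simp: edge_word_def)

context
  fixes M :: nat and c :: "nat list" and x :: "nat \<Rightarrow> nat"
  assumes fwc: "fundamental M c" and xV: "x \<in> Vseq M"
    and lo: "lex_less (expand M c 0 zeros) x" and hi: "lex_le x (expand M c 0 ones)"
begin

abbreviation xblock where "xblock k \<equiv> block (length c) x k"

lemma set_xblock_le: "\<forall>z\<in>set (xblock k). z \<le> M"
  using xV by (auto simp: Vseq_def block_def seg_def Omega_def)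

lemma xblock_shift_le: "\<forall>s<t. xblock (k + s) = xblock s \<Longrightarrow>
  wlex_le (xblock (k + t)) (xblock t)"
proof -
  assume a: "\<forall>s<t. xblock (k + s) = xblock s"
  have "lex_le (shift (k * length c) x) x" using xV by (simp add: Vseq_def)
  from lex_le_imp_block_le[OF fundamental_length_pos[OF fwc] this] a show ?thesis by (simp add: block_shift)
qed

lemma xblock_srefl_le: "\<forall>s<t. wrefl M (xblock s) = xblock (k + s) \<Longrightarrow>
  wlex_le (wrefl M (xblock t)) (xblock (k + t))"
proof -
  assume a: "\<forall>s<t. wrefl M (xblock s) = xblock (k + s)"
  have "lex_le (srefl M x) (shift (k * length c) x)" using xV by (simp add: Vseq_def)
  from lex_le_imp_block_le[OF fundamental_length_pos[OF fwc] this] a show ?thesis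
    by (simp add: block_shift block_srefl)
qed

lemma xblock_le_upper: "\<forall>s<t. xblock s =
  edge_word M c (prev_bit 0 ones s) 1 \<Longrightarrow> wlex_le (xblock t) (edge_word M c (prev_bit 0 ones t) 1)"
proof -
  assume a: "\<forall>s<t. xblock s = edge_word M c (prev_bit 0 ones s) 1"
  from lex_le_imp_block_le[OF fundamental_length_pos[OF fwc] hi] a show ?thesis
    by (simp add: block_expand[OF fundamental_incrementable[OF fwc]])
qed

lemma xblock_ge_lower: "\<forall>s<t. xblock s = c \<Longrightarrow> wlex_le c (xblock t)"
proof -
  assume a: "\<forall>s<t. xblock s = c"
  have "block (length c) (expand M c 0 zeros) s = c" for s
    by (simp add: block_expand[OF fundamental_incrementable[OF fwc]] prev_bit_def)
  with lex_le_imp_block_le[OF fundamental_length_pos[OF fwc] lex_less_imp_le[OF lo], of t] a show ?thesis by simp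
qed

lemma wlex_le_between_wrefl:
  assumes "wlex_le (wrefl M (wplus c)) w" "wlex_le w (wrefl M c)" "length w = length c"
    "\<forall>z\<in>set w. z \<le> M"
  shows "w = wrefl M (wplus c) \<or> w = wrefl M c"
proof -
  have cl: "\<forall>z\<in>set c. z \<le> M" and cpl: "\<forall>z\<in>set (wplus c). z \<le> M"
    using fundamental_incrementable[OF fwc] incrementable_wplus_le[OF fundamental_incrementable[OF
      fwc]] by (auto simp: incrementable_def)
  have "wlex_le (wrefl M w) (wrefl M (wrefl M (wplus c)))"
    by (rule wlex_le_wrefl[OF _ wrefl_le assms(4) assms(1)]) (use assms fundamental_nonempty[OF fwc] in simp)
  then have 1: "wlex_le (wrefl M w) (wplus c)" using wrefl_wrefl[OF cpl] by simp
  have "wlex_le (wrefl M (wrefl M c)) (wrefl M w)"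
    by (rule wlex_le_wrefl[OF _ assms(4) wrefl_le assms(2)]) (use assms in simp)
  then have 2: "wlex_le c (wrefl M w)" using wrefl_wrefl[OF cl] by simp
  have "wrefl M w = c \<or> wrefl M w = wplus c"
    using wlex_le_between_wplus[OF _ _ 2 1] assms fundamental_nonempty[OF fwc] by simp
  then show ?thesis using wrefl_wrefl[OF assms(4)] by metis
qed

lemma xblock_0: "xblock 0 = wplus c"
proof -
  have "wlex_le c (xblock 0)" using xblock_ge_lower[of 0] by simp
  moreover have "wlex_le (xblock 0) (wplus c)" using xblock_le_upper[of 0] by simp
  ultimately have "xblock 0 = c \<or> xblock 0 = wplus c"
    using wlex_le_between_wplus fundamental_nonempty[OF fwc] by simp
  moreover have "xblock 0 \<noteq> c"
  proof
    assume b0: "xblock 0 = c"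
    have "\<exists>j. xblock j \<noteq> c"
    proof (rule ccontr)
      assume "\<not> (\<exists>j. xblock j \<noteq> c)"
      then have "x = expand M c 0 zeros"
        by (intro block_ext[OF fundamental_length_pos[OF fwc]]) (simp add: block_expand[OF
          fundamental_incrementable[OF fwc]] prev_bit_def)
      then show False using lo by simp
    qed
    then obtain j1 where "xblock j1 \<noteq> c" by blast
    define j where "j = (LEAST j. xblock j \<noteq> c)"
    have j1: "xblock j \<noteq> c" unfolding j_def by (rule LeastI[of _ j1]) fact
    have j2: "\<forall>s<j. xblock s = c" unfolding j_def using not_less_Least by blast
    have "wlex_le (xblock (j + 0)) (xblock 0)" by (rule xblock_shift_le) simp
    then have "wlex_le (xblock j) c" using b0 by simp
    moreover have "wlex_le c (xblock j)" using xblock_ge_lower j2 by blast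
    ultimately show False using j1 wlex_le_antisym[of c "xblock j"] by auto
  qed
  ultimately show ?thesis by blast
qed

text \<open>The bit sequence of the path in $G$ along which $x$ is read: after a $B$-block
  ($c$ or $c^+$) the next block is $c$ or $c^+$, after an $A$-block
  ($\overline{c^+}$ or $\overline c$) it is $\overline{c^+}$ or $\overline c$.\<close>

definition path_bits :: "nat \<Rightarrow> nat" where
  "path_bits = rec_nat 1 (\<lambda>k r. if r = 0 then (if xblock (Suc k) = wplus c then 1 else 0)
                              else (if xblock (Suc k) = wrefl M c then 1 else 0))"

lemma path_bits_0 [simp]: "path_bits 0 = 1" by (simp add: path_bits_def)

lemma path_bits_Suc: "path_bits (Suc k) = (if path_bits k = 0 then (if xblock (Suc k) = wplus c then 1 else 0)
                              else (if xblock (Suc k) = wrefl M c then 1 else 0))"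
  by (simp add: path_bits_def)

lemma path_bits_le: "path_bits k \<le> 1" by (cases k) (auto simp: path_bits_Suc)

lemma path_bits_Omega: "path_bits \<in> Omega 1" using path_bits_le by (auto simp: Omega_def)

lemma wrefl_edge_word_A: "v \<le> 1 \<Longrightarrow> wrefl M (edge_word M c 1 v) = edge_word M c 0 (1 - v)"
  using wrefl_edge_word[OF fundamental_incrementable[OF fwc], of 1 v] by simp

abbreviation blocks_follow_path :: "nat \<Rightarrow> bool" where
  "blocks_follow_path k \<equiv> \<forall>j\<le>k. xblock j = edge_word M c (prev_bit 0 path_bits j) (path_bits j)"

lemma xblock_in_run:
  assumes IH: "blocks_follow_path k" and run: "\<forall>j. i \<le> j \<and>
    j \<le> k \<longrightarrow> path_bits j = v"
    and j: "i < j" "j \<le> k"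
  shows "xblock j = edge_word M c v v"
proof -
  have "prev_bit 0 path_bits j = v" using run[rule_format, of "j - 1"] j by (cases j) auto
  then show ?thesis using IH run j by simp
qed

lemma xblock_mirror_run:
  assumes IH: "blocks_follow_path k" and i: "0 < i" "i \<le> k" "path_bits (i - 1) = 1"
    and run: "\<forall>j. i \<le> j \<and> j \<le> k \<longrightarrow> path_bits j = 0" and s: "s \<le> k - i"
  shows "path_bits s = 1 \<and> (\<forall>s'\<le>s. wrefl M (xblock s') = xblock (i + s'))"
  using s
proof (induction s)
  case 0
  have "prev_bit 0 path_bits i = 1" using i by (cases i) auto
  then show ?case using xblock_0 IH i(2) run by simp
next
  case (Suc s)
  then have ih: "path_bits s = 1" "\<forall>s'\<le>s. wrefl M (xblock s') = xblock (i + s')" by auto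
  then have "\<forall>s'<Suc s. wrefl M (xblock s') = xblock (i + s')" by auto
  then have "wlex_le (wrefl M (xblock (Suc s))) (xblock (i + Suc s))" by (rule xblock_srefl_le)
  moreover have "xblock (i + Suc s) = c" using xblock_in_run[OF IH run] Suc.prems i by simp
  moreover have "xblock (Suc s) = edge_word M c 1 (path_bits (Suc s))"
    using IH Suc.prems ih(1) i by simp
  ultimately have le: "wlex_le (edge_word M c 0 (1 - path_bits (Suc s))) c"
    using wrefl_edge_word_A[OF path_bits_le] by simp
  have "path_bits (Suc s) = 1"
  proof (rule ccontr)
    assume "path_bits (Suc s) \<noteq> 1"
    then have "path_bits (Suc s) = 0" using path_bits_le[of "Suc s"] by auto
    then show False
      using le fundamental_less_wplus[OF fwc] wlex_less_not_le[of c "wplus c"]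
        length_wplus[OF fundamental_nonempty[OF fwc]] by simp
  qed
  then show ?case using ih le \<open>xblock (Suc s) = _\<close> \<open>xblock (i + Suc s) =
    c\<close> wrefl_edge_word_A[of 1]
    by (auto simp: le_Suc_eq)
qed

lemma xblock_repeat_run:
  assumes IH: "blocks_follow_path k" and i: "0 < i" "i \<le> k" "path_bits (i - 1) = 0"
    and run: "\<forall>j. i \<le> j \<and> j \<le> k \<longrightarrow> path_bits j = 1" and s: "s \<le> k - i"
  shows "path_bits s = 1 \<and> (\<forall>s'\<le>s. xblock (i + s') = xblock s')"
  using s
proof (induction s)
  case 0
  have "prev_bit 0 path_bits i = 0" using i by (cases i) auto
  then show ?case using xblock_0 IH i(2) run by simp
next
  case (Suc s)
  then have ih: "path_bits s = 1" "\<forall>s'\<le>s. xblock (i + s') = xblock s'" by auto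
  then have "\<forall>s'<Suc s. xblock (i + s') = xblock s'" by auto
  then have le: "wlex_le (xblock (i + Suc s)) (xblock (Suc s))" by (rule xblock_shift_le)
  have bis: "xblock (i + Suc s) = wrefl M c" using xblock_in_run[OF IH run] Suc.prems i by simp
  have bs: "xblock (Suc s) = edge_word M c 1 (path_bits (Suc s))" using IH Suc.prems ih(1) i by simp
  have "path_bits (Suc s) = 1"
  proof (rule ccontr)
    assume "path_bits (Suc s) \<noteq> 1"
    then have "path_bits (Suc s) = 0" using path_bits_le[of "Suc s"] by auto
    then show False
      using le bis bs fundamental_wrefl_wplus_less[OF fwc] wlex_less_not_le[of "wrefl M (wplus c)" "wrefl M c"]
        length_wplus[OF fundamental_nonempty[OF fwc]] by simp
  qed
  then show ?case using ih bis bs by (auto simp: le_Suc_eq)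
qed

lemma xblock_Suc_after_B:
  assumes IH: "blocks_follow_path k" and yk: "path_bits k = 0"
  shows "wlex_le c (xblock (Suc k))" "wlex_le (xblock (Suc k)) (wplus c)"
proof -
  show "wlex_le (xblock (Suc k)) (wplus c)" using xblock_shift_le[of 0 "Suc k"] xblock_0 by simp
  obtain i where i: "i \<le> k" "i = 0 \<or> path_bits (i - 1) \<noteq> path_bits k"
    and run: "\<forall>j. i \<le> j \<and> j \<le> k \<longrightarrow> path_bits j = path_bits k"
    using exists_run_start by blast
  have i0: "0 < i" using run[rule_format, of 0] yk by (cases i) auto
  have yi: "path_bits (i - 1) = 1" using i(2) i0 yk path_bits_le[of "i - 1"] by auto
  note mirror = xblock_mirror_run[OF IH i0 i(1) yi, of "k - i"]
  have "\<forall>s'<Suc (k - i). wrefl M (xblock s') = xblock (i + s')" using mirror run yk by auto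
  then have "wlex_le (wrefl M (xblock (Suc (k - i)))) (xblock (Suc k))"
    using xblock_srefl_le[of "Suc (k - i)" i] i(1) by (simp add: Suc_diff_le)
  moreover have "xblock (Suc (k - i)) = edge_word M c 1 (path_bits (Suc (k - i)))"
    using IH mirror run yk i0 i(1) by (simp add: Suc_diff_le)
  ultimately have "wlex_le (edge_word M c 0 (1 - path_bits (Suc (k - i)))) (xblock (Suc k))"
    using wrefl_edge_word_A[OF path_bits_le] by simp
  moreover have "wlex_le c (edge_word M c 0 (1 - path_bits (Suc (k - i))))"
    using fundamental_less_wplus[OF fwc] path_bits_le[of "Suc (k - i)"] by (cases "path_bits (Suc (k - i))") auto
  ultimately show "wlex_le c (xblock (Suc k))" using wlex_le_trans[of c]
    by (metis length_edge_word[OF fundamental_incrementable[OF fwc]])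
qed

lemma xblock_Suc_after_A:
  assumes IH: "blocks_follow_path k" and yk: "path_bits k = 1"
  shows "wlex_le (wrefl M (wplus c)) (xblock (Suc k))" "wlex_le (xblock (Suc k)) (wrefl M c)"
proof -
  show "wlex_le (wrefl M (wplus c)) (xblock (Suc k))" using xblock_srefl_le[of 0 "Suc k"] xblock_0 by simp
  obtain i where i: "i \<le> k" "i = 0 \<or> path_bits (i - 1) \<noteq> path_bits k"
    and run: "\<forall>j. i \<le> j \<and> j \<le> k \<longrightarrow> path_bits j = path_bits k"
    using exists_run_start by blast
  show "wlex_le (xblock (Suc k)) (wrefl M c)"
  proof (cases "i = 0")
    case True
    have "xblock s = edge_word M c (prev_bit 0 ones s) 1" if "s < Suc k" for s
      using xblock_0 xblock_in_run[OF IH, of 0 1 s] run yk True that by (cases s) auto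
    then show ?thesis using xblock_le_upper[of "Suc k"] by simp
  next
    case False
    then have i0: "0 < i" by simp
    have yi: "path_bits (i - 1) = 0" using i(2) i0 yk path_bits_le[of "i - 1"] by auto
    note repeat = xblock_repeat_run[OF IH i0 i(1) yi, of "k - i"]
    have "\<forall>s'<Suc (k - i). xblock (i + s') = xblock s'" using repeat run yk by auto
    then have "wlex_le (xblock (i + Suc (k - i))) (xblock (Suc (k - i)))" by (rule xblock_shift_le)
    then have "wlex_le (xblock (Suc k)) (xblock (Suc (k - i)))" using i(1) by simp
    moreover have "xblock (Suc (k - i)) = edge_word M c 1 (path_bits (Suc (k - i)))"
      using IH repeat run yk i0 i(1) by (simp add: Suc_diff_le)
    moreover have "wlex_le (edge_word M c 1 (path_bits (Suc (k - i)))) (wrefl M c)"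
      using fundamental_wrefl_wplus_less[OF fwc] path_bits_le[of "Suc (k - i)"]
      by (cases "path_bits (Suc (k - i))") auto
    ultimately show ?thesis
      using wlex_le_trans length_edge_word[OF fundamental_incrementable[OF fwc]] by (metis length_block)
  qed
qed

lemma xblock_eq_edge_word: "blocks_follow_path k"
proof (induction k)
  case 0 then show ?case using xblock_0 by simp
next
  case (Suc k)
  have "xblock (Suc k) = edge_word M c (path_bits k) (path_bits (Suc k))"
  proof (cases "path_bits k = 0")
    case True
    then have "xblock (Suc k) = c \<or> xblock (Suc k) = wplus c"
      using xblock_Suc_after_B[OF Suc.IH True] wlex_le_between_wplus fundamental_nonempty[OF fwc] by simp
    then show ?thesis using True fundamental_less_wplus[OF fwc] by (auto simp: path_bits_Suc)
  next
    case False
    then have yk: "path_bits k = 1" using path_bits_le[of k] by auto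
    then have "xblock (Suc k) = wrefl M (wplus c) \<or> xblock (Suc k) = wrefl M c"
      using xblock_Suc_after_A[OF Suc.IH yk] wlex_le_between_wrefl set_xblock_le by simp
    then show ?thesis using yk fundamental_wrefl_wplus_less[OF fwc] by (auto simp: path_bits_Suc)
  qed
  then show ?case using Suc.IH by (auto simp: le_Suc_eq)
qed

lemma x_eq_expand_path_bits: "x = expand M c 0 path_bits"
  by (rule block_ext[OF fundamental_length_pos[OF fwc]])
    (use xblock_eq_edge_word in \<open>auto simp: block_expand[OF fundamental_incrementable[OF fwc]]\<close>)

end

lemma Vseq_between_imp_expand:
  assumes "fundamental M c" "x \<in> Vseq M" "lex_less (expand M c 0 zeros) x" "lex_le x (expand M c 0 ones)"
  shows "\<exists>y. y \<in> Omega 1 \<and> y 0 = 1 \<and> x = expand M c 0 y"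
  using x_eq_expand_path_bits[OF assms] path_bits_Omega[OF assms] path_bits_0[OF assms] by blast


section \<open>The intervals $(q_L, q_R]$ and the map $\hat\Phi$\<close>

lemma per_eq_expand: "incrementable M c \<Longrightarrow> per c = expand M c 0 zeros"
  by (auto simp: per_def expand_def prev_bit_def edge_word_def fun_eq_iff)

lemma pre_per_eq_expand:
  assumes ok: "incrementable M c"
  shows "pre_per (wplus c) (wrefl M c) = expand M c 0 ones"
proof
  fix i
  have m: "0 < length c" using ok by (simp add: incrementable_def)
  show "pre_per (wplus c) (wrefl M c) i = expand M c 0 ones i"
  proof (cases "i < length c")
    case True then show ?thesis using m by (simp add: pre_per_def expand_def prev_bit_def edge_word_def)
  next
    case False
    then have "i div length c \<noteq> 0" using m by (simp add: le_div_geq)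
    moreover have "(i - length c) mod length c = i mod length c" using False by (simp add: le_mod_geq)
    ultimately show ?thesis using False m by (simp add: pre_per_def expand_def prev_bit_def edge_word_def per_def)
  qed
qed

lemma expand_zeros_shift_le:
  assumes fwc: "fundamental M c"
  shows "lex_le (shift n (expand M c 0 zeros)) (expand M c 0 zeros)"
proof -
  let ?m = "length c" and ?x = "expand M c 0 zeros"
  have ok: "incrementable M c" using fwc by (simp add: fundamental_def)
  have mpos: "0 < ?m" using ok by (simp add: incrementable_def)
  have xi: "?x j = c ! (j mod ?m)" for j by (simp add: expand_def prev_bit_def edge_word_def)
  define k where "k = n div ?m"
  define i where "i = n mod ?m"
  have n: "n = k * ?m + i" unfolding k_def i_def by simp
  show ?thesis
  proof (cases "i = 0")
    case True
    have e: "shift (k * ?m) ?x = expand M c (prev_bit 0 zeros k) (shift k zeros)" by (rule shift_expand[OF ok])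
    have "prev_bit 0 zeros k = 0" "shift k zeros = zeros" by (auto simp: prev_bit_def shift_def)
    then have "shift n ?x = ?x" using n True e by simp
    then show ?thesis by simp
  next
    case False
    then have i: "0 < i" "i < ?m" using mpos unfolding i_def by auto
    have "seg (shift n ?x) 0 (?m - i) = drop i c"
    proof (rule nth_equalityI)
      fix j assume "j < length (seg (shift n ?x) 0 (?m - i))"
      then have j: "j < ?m - i" by simp
      have nj: "n + j = (i + j) + k * ?m" using n by simp
      have "(n + j) mod ?m = (i + j) mod ?m" unfolding nj by (rule mod_mult_self1)
      also have "\<dots> = i + j" using j i by simp
      finally have "(n + j) mod ?m = i + j" .
      then show "seg (shift n ?x) 0 (?m - i) ! j = drop i c ! j" using j i by (simp add: shift_def xi add.commute)
    qed (use i in simp)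
    moreover have "seg ?x 0 (?m - i) = take (?m - i) c"
      by (rule nth_equalityI) (use i in \<open>auto simp: xi\<close>)
    ultimately have "wlex_less (seg (shift n ?x) 0 (?m - i)) (seg ?x 0 (?m - i))"
      using fundamental_drop_take[OF fwc i] by simp
    then show ?thesis using seg_less_imp_lex_less[of 0] lex_less_imp_le by blast
  qed
qed

lemma inf_nonzero_expand_zeros:
  assumes ok: "incrementable M c" and c0: "1 \<le> c ! 0"
  shows "inf_nonzero (expand M c 0 zeros)"
  unfolding inf_nonzero_def
proof
  fix N
  have m: "0 < length c" using ok by (simp add: incrementable_def)
  have "expand M c 0 zeros (N * length c) = c ! 0" using m by (simp add: expand_def prev_bit_def edge_word_def)
  moreover have "N \<le> N * length c" using m by (cases "length c") auto
  ultimately show "\<exists>n\<ge>N. expand M c 0 zeros n \<noteq> 0" using c0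
    by (intro exI[of _ "N * length c"]) auto
qed

lemma inf_nonzero_expand_ones:
  assumes ok: "incrementable M c"
  shows "inf_nonzero (expand M c 0 ones)"
  unfolding inf_nonzero_def
proof
  fix N
  obtain m' where m': "length c = Suc m'" using ok by (cases "length c") (auto simp: incrementable_def)
  have l: "c ! m' < M" using ok m' by (auto simp: incrementable_def last_conv_nth)
  let ?n = "m' + Suc N * Suc m'"
  have "?n div Suc m' = Suc N + m' div Suc m'" by (rule div_mult_self1) simp
  then have d: "?n div Suc m' = Suc N" by simp
  have "?n mod Suc m' = m' mod Suc m'" by (rule mod_mult_self1)
  then have md: "?n mod Suc m' = m'" by simp
  have "expand M c 0 ones ?n = M - c ! m'" unfolding expand_def m' d md
    by (simp add: prev_bit_def edge_word_def m')
  moreover have "N \<le> ?n" by simp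
  ultimately show "\<exists>n\<ge>N. expand M c 0 ones n \<noteq> 0" using l by (intro exI[of _ ?n]) auto
qed

lemma binary_lex_le_ones: "y \<in> Omega 1 \<Longrightarrow> lex_le y ones"
  using not_lex_le_iff unfolding lex_less_def by (metis binary_le_one not_le)

lemma expand_first: "incrementable M c \<Longrightarrow> y 0 = 1 \<Longrightarrow> expand M c 0 y 0 = wplus c ! 0"
  by (auto simp: expand_def incrementable_def)

lemma expand_zeros_first: "expand M c 0 zeros 0 = c ! 0"
  by (simp add: expand_def edge_word_def)

lemma expand_binary_first:
  assumes ok: "incrementable 1 c" "c ! 0 = 1" and y: "y \<in> Omega 1" "y 0 = 1"
  shows "expand 1 c 0 y 0 = 1"
proof -
  have "expand 1 c 0 y 0 \<le> 1" using expand_Omega[OF ok(1)] by (auto simp: Omega_def)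
  moreover have "expand 1 c 0 y 0 = wplus c ! 0" using expand_first[of 1 c y] ok(1) y(2) by simp
  moreover have "wplus c ! 0 \<ge> c ! 0" using ok by (auto simp: incrementable_def wplus_nth)
  ultimately show ?thesis using ok by simp
qed

lemma the_alpha_eq:
  assumes "1 < q" "q \<le> real M + 1" "alpha M q = d"
  shows "(THE q. 1 < q \<and> q \<le> real M + 1 \<and> alpha M q = d) = q"
  by (rule the_equality) (use assms alpha_inj in auto)

lemma qL_props:
  assumes M: "M \<ge> 1" and c: "incrementable M c" and x: "inf_nonzero (expand M c 0 zeros)"
    and sh: "\<And>n. lex_le (shift n (expand M c 0 zeros)) (expand M c 0 zeros)"
  shows "1 < qL M c" "qL M c \<le> real M + 1" "alpha M (qL M c) = expand M c 0 zeros"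
proof -
  obtain q where q: "1 < q" "q \<le> real M + 1" "alpha M q = expand M c 0 zeros"
    using exists_alpha_eq[OF M expand_Omega[OF c] x sh] by blast
  moreover have "qL M c = q" unfolding qL_def per_eq_expand[OF c] by (rule the_alpha_eq[OF q])
  ultimately show "1 < qL M c" "qL M c \<le> real M + 1" "alpha M (qL M c) = expand M c 0 zeros"
    by simp_all
qed

lemma qR_props:
  assumes M: "M \<ge> 1" and c: "incrementable M c"
    and sh: "\<And>n. lex_le (shift n (expand M c 0 ones)) (expand M c 0 ones)"
  shows "1 < qR M c" "qR M c \<le> real M + 1" "alpha M (qR M c) = expand M c 0 ones"
proof -
  obtain q where q: "1 < q" "q \<le> real M + 1" "alpha M q = expand M c 0 ones"
    using exists_alpha_eq[OF M expand_Omega[OF c] inf_nonzero_expand_ones[OF c] sh] by blast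
  moreover have "qR M c = q" unfolding qR_def pre_per_eq_expand[OF c] by (rule the_alpha_eq[OF q])
  ultimately show "1 < qR M c" "qR M c \<le> real M + 1" "alpha M (qR M c) = expand M c 0 ones"
    by simp_all
qed

lemma DomI:
  assumes L: "1 < qL M c" "qL M c \<le> real M + 1" "alpha M (qL M c) = xL"
    and R: "1 < qR M c" "qR M c \<le> real M + 1" "alpha M (qR M c) = xR"
    and q: "q \<in> Vset M" "lex_less xL (alpha M q)" "lex_le (alpha M q) xR"
  shows "q \<in> Dom M c"
proof -
  have q1: "1 < q" "q \<le> real M + 1" using q(1) by (auto simp: Vset_def)
  have "qL M c < q" using alpha_less_imp_less[OF L(1,2) q1] L(3) q(2) by simp
  moreover have "q \<le> qR M c" using alpha_le_imp_le[OF q1 R(1,2)] R(3) q(3) by simp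
  ultimately show ?thesis using q(1) by (simp add: Dom_def)
qed

lemma DomD:
  assumes L: "1 < qL M c" and R: "qR M c \<le> real M + 1" and q: "q \<in> Dom M c"
  shows "q \<in> Vset M" "lex_less (alpha M (qL M c)) (alpha M q)" "lex_le (alpha M q) (alpha M (qR M c))"
  using q L R alpha_strict_mono[of "qL M c" q M] alpha_mono[of q "qR M c" M]
  by (auto simp: Dom_def Vset_def)

lemma Phihat_eqI:
  assumes c: "incrementable M c" and y: "y \<in> Omega 1" "y 0 = 1" "alpha M q = expand M c 0 y"
    and p: "1 < p" "p \<le> 2" "alpha 1 p = y"
  shows "Phihat M c q = p"
  unfolding Phihat_def
proof (rule the_equality)
  show "1 < p \<and> p \<le> 2 \<and> alpha 1 p = Phi M c (alpha M q)"
    using p y Phi_expand[OF c y(1,2)] by simp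
  fix p' assume "1 < p' \<and> p' \<le> 2 \<and> alpha 1 p' = Phi M c (alpha M q)"
  then show "p' = p" using p y Phi_expand[OF c y(1,2)] alpha_inj[of p' 1 p] by simp
qed

context
  fixes M :: nat and c :: "nat list"
  assumes fwc: "fundamental M c"
begin

lemma fundamental_qL: "1 < qL M c" "qL M c \<le> real M + 1" "alpha M (qL M c) = expand M c 0 zeros"
  using qL_props[OF fundamental_M_pos[OF fwc] fundamental_incrementable[OF fwc]
      inf_nonzero_expand_zeros[OF fundamental_incrementable[OF fwc] fundamental_first_ge_1[OF fwc]]
      expand_zeros_shift_le[OF fwc]] .

lemma fundamental_qR: "1 < qR M c" "qR M c \<le> real M + 1" "alpha M (qR M c) = expand M c 0 ones"
  using qR_props[OF fundamental_M_pos[OF fwc] fundamental_incrementable[OF fwc]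
      expand_shift_le[OF fwc ones_Omega _ lex_le_shift_ones]] by simp_all

lemma Dom_obtain_expand:
  assumes q: "q \<in> Dom M c"
  obtains y where "y \<in> Omega 1" "y 0 = 1" "alpha M q = expand M c 0 y" "y \<in> Vseq 1"
    "1 < Phihat M c q" "Phihat M c q \<le> 2" "alpha 1 (Phihat M c q) = y"
proof -
  note bounds = DomD[OF fundamental_qL(1) fundamental_qR(2) q]
  obtain y where y: "y \<in> Omega 1" "y 0 = 1" "alpha M q = expand M c 0 y"
    using Vseq_between_imp_expand[OF fwc] bounds fundamental_qL(3) fundamental_qR(3)
    by (auto simp: Vset_def)
  have yV: "y \<in> Vseq 1"
    using Vseq_expand_imp_Vseq[OF fundamental_incrementable[OF fwc] y(1,2)] bounds(1) y(3) by (simp add: Vset_def)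
  obtain p where p: "1 < p" "p \<le> 2" "alpha 1 p = y"
    using exists_alpha_eq[of 1 y] y(1) Vseq_inf_nonzero[OF _ yV] yV by (auto simp: Vseq_def)
  have "Phihat M c q = p" by (rule Phihat_eqI[OF fundamental_incrementable[OF fwc] y p])
  then show ?thesis using that y yV p by simp
qed

lemma inj_on_Phihat: "inj_on (Phihat M c) (Dom M c)"
proof (rule inj_onI)
  fix q1 q2 assume q: "q1 \<in> Dom M c" "q2 \<in> Dom M c" "Phihat M c q1 = Phihat M c q2"
  obtain y1 where "alpha M q1 = expand M c 0 y1" "alpha 1 (Phihat M c q1) = y1"
    using Dom_obtain_expand[OF q(1)] by blast
  moreover obtain y2 where "alpha M q2 = expand M c 0 y2" "alpha 1 (Phihat M c q2) = y2"
    using Dom_obtain_expand[OF q(2)] by blast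
  ultimately have "alpha M q1 = alpha M q2" using q(3) by simp
  then show "q1 = q2" using alpha_inj[of q1 M q2] q(1,2) by (auto simp: Dom_def Vset_def)
qed

end


section \<open>Composition of $\Phi$ and $\hat\Phi$\<close>

lemma lex_less_zeros: "y 0 = 1 \<Longrightarrow> lex_less zeros y"
  unfolding lex_less_def by (intro exI[of _ 0]) auto

lemma expand_binary_Xstar:
  assumes "incrementable 1 b" "b ! 0 = 1" "y \<in> Omega 1" "y 0 = 1"
  shows "expand 1 b 0 y \<in> Omega 1" "expand 1 b 0 y 0 = 1"
  using expand_Omega[OF assms(1)] expand_binary_first[OF assms] by auto

context
  fixes M :: nat and a b :: "nat list"
  assumes fwa: "fundamental M a" and fwb: "fundamental 1 b" and b0: "b ! 0 = 1"
begin

lemma comp_incrementable: "incrementable M (comp M a b)"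
  by (rule incrementable_comp[OF fundamental_incrementable[OF fwa] fundamental_incrementable[OF fwb] b0])

lemma expand_comp_fundamental: "z \<in> Omega 1 \<Longrightarrow>
  expand M (comp M a b) 0 z = expand M a 0 (expand 1 b 0 z)"
  by (rule expand_comp[OF fundamental_incrementable[OF fwa] fundamental_incrementable[OF fwb] b0])

lemma comp_qL:
  "1 < qL M (comp M a b)" "qL M (comp M a b) \<le> real M + 1"
  "alpha M (qL M (comp M a b)) = expand M a 0 (expand 1 b 0 zeros)"
proof -
  let ?Z = "expand 1 b 0 zeros"
  have b: "incrementable 1 b" by (rule fundamental_incrementable[OF fwb])
  have eq: "expand M (comp M a b) 0 zeros = expand M a 0 ?Z" by (rule expand_comp_fundamental[OF zeros_Omega])
  have "inf_nonzero (expand M (comp M a b) 0 zeros)"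
    using comp_first_ge_1[OF fundamental_incrementable[OF fwa] b b0 fundamental_first_ge_1[OF fwa]]
    by (rule inf_nonzero_expand_zeros[OF comp_incrementable])
  moreover have "lex_le (shift n (expand M (comp M a b) 0 zeros)) (expand M (comp M a b) 0 zeros)" for n
    unfolding eq using expand_Omega[OF b] expand_zeros_first b0
    by (intro expand_shift_le[OF fwa _ _ expand_zeros_shift_le[OF fwb]]) simp_all
  ultimately show "1 < qL M (comp M a b)" "qL M (comp M a b) \<le> real M + 1"
    "alpha M (qL M (comp M a b)) = expand M a 0 ?Z"
    using qL_props[OF fundamental_M_pos[OF fwa] comp_incrementable] unfolding eq by blast+
qed

lemma comp_qR:
  "1 < qR M (comp M a b)" "qR M (comp M a b) \<le> real M + 1"
  "alpha M (qR M (comp M a b)) = expand M a 0 (expand 1 b 0 ones)"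
proof -
  let ?O = "expand 1 b 0 ones"
  have eq: "expand M (comp M a b) 0 ones = expand M a 0 ?O" by (rule expand_comp_fundamental[OF ones_Omega])
  have O: "?O \<in> Omega 1" "?O 0 = 1"
    using expand_binary_Xstar[OF fundamental_incrementable[OF fwb] b0 ones_Omega] by simp_all
  have "lex_le (shift n (expand M (comp M a b) 0 ones)) (expand M (comp M a b) 0 ones)" for n
    unfolding eq by (rule expand_shift_le[OF fwa O expand_shift_le[OF fwb ones_Omega _ lex_le_shift_ones]]) simp
  then show "1 < qR M (comp M a b)" "qR M (comp M a b) \<le> real M + 1"
    "alpha M (qR M (comp M a b)) = expand M a 0 ?O"
    using qR_props[OF fundamental_M_pos[OF fwa] comp_incrementable] unfolding eq by blast+
qed

lemma Dom_comp_imp_Dom: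
  assumes q: "q \<in> Dom M (comp M a b)"
  shows "q \<in> Dom M a"
proof (rule DomI[OF fundamental_qL[OF fwa] fundamental_qR[OF fwa]])
  let ?Z = "expand 1 b 0 zeros" and ?O = "expand 1 b 0 ones"
  note bounds = DomD[OF comp_qL(1) comp_qR(2) q, unfolded comp_qL(3) comp_qR(3)]
  have a: "incrementable M a" by (rule fundamental_incrementable[OF fwa])
  have b: "incrementable 1 b" by (rule fundamental_incrementable[OF fwb])
  have Z: "?Z \<in> Omega 1" "?Z 0 = 1" using expand_Omega[OF b] expand_zeros_first b0 by simp_all
  show "q \<in> Vset M" by (rule bounds(1))
  have "lex_less (expand M a 0 zeros) (expand M a 0 ?Z)"
    by (rule expand_strict_mono[OF a zeros_Omega Z(1) lex_less_zeros[of "expand 1 b 0 zeros", OF Z(2)]])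
  then show "lex_less (expand M a 0 zeros) (alpha M q)" using bounds(2) by (rule lex_less_trans)
  have "lex_le (expand M a 0 ?O) (expand M a 0 ones)"
    using expand_lex_le_iff[OF a expand_Omega[OF b] ones_Omega] binary_lex_le_ones[OF expand_Omega[OF b]]
    by simp
  with bounds(3) show "lex_le (alpha M q) (expand M a 0 ones)" by (rule lex_le_trans)
qed

lemma Phihat_comp:
  assumes q: "q \<in> Dom M (comp M a b)"
  shows "Phihat M a q \<in> Dom 1 b" "Phihat M (comp M a b) q = Phihat 1 b (Phihat M a q)"
proof -
  have a: "incrementable M a" by (rule fundamental_incrementable[OF fwa])
  have b: "incrementable 1 b" by (rule fundamental_incrementable[OF fwb])
  note bounds = DomD[OF comp_qL(1) comp_qR(2) q, unfolded comp_qL(3) comp_qR(3)]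
  obtain y where y: "y \<in> Omega 1" "y 0 = 1" "alpha M q = expand M a 0 y" "y \<in> Vseq 1"
      "1 < Phihat M a q" "Phihat M a q \<le> 2" "alpha 1 (Phihat M a q) = y"
    using Dom_obtain_expand[OF fwa Dom_comp_imp_Dom[OF q]] by blast
  show p: "Phihat M a q \<in> Dom 1 b"
  proof (rule DomI[OF fundamental_qL[OF fwb] fundamental_qR[OF fwb]])
    show "Phihat M a q \<in> Vset 1" using y by (simp add: Vset_def)
    show "lex_less (expand 1 b 0 zeros) (alpha 1 (Phihat M a q))"
      using bounds(2) y(3,7) expand_lex_less_iff[OF a expand_Omega[OF b] y(1)] by simp
    show "lex_le (alpha 1 (Phihat M a q)) (expand 1 b 0 ones)"
      using bounds(3) y(3,7) expand_lex_le_iff[OF a y(1) expand_Omega[OF b]] by simp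
  qed
  obtain z where z: "z \<in> Omega 1" "z 0 = 1" "alpha 1 (Phihat M a q) = expand 1 b 0 z"
      "1 < Phihat 1 b (Phihat M a q)" "Phihat 1 b (Phihat M a q) \<le> 2"
      "alpha 1 (Phihat 1 b (Phihat M a q)) = z"
    using Dom_obtain_expand[OF fwb p] by blast
  have "alpha M q = expand M (comp M a b) 0 z" using y(3,7) z(3) expand_comp_fundamental[OF z(1)] by simp
  then show "Phihat M (comp M a b) q = Phihat 1 b (Phihat M a q)"
    using Phihat_eqI[OF comp_incrementable z(1,2)] z(4-6) by blast
qed

lemma Phi_comp:
  assumes x: "x \<in> X M (comp M a b)"
  shows "Phi M a x \<in> X 1 b" "Phi M (comp M a b) x = Phi 1 b (Phi M a x)"
proof -
  have b: "incrementable 1 b" by (rule fundamental_incrementable[OF fwb])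
  obtain z where z: "x = expand M (comp M a b) 0 z" "z \<in> Omega 1" "z 0 = 1"
    using x X_eq[OF incrementable_nonempty[OF comp_incrementable]] by auto
  note w = expand_binary_Xstar[OF b b0 z(2,3)]
  have "Phi M a x = expand 1 b 0 z"
    using z expand_comp_fundamental Phi_expand[OF fundamental_incrementable[OF fwa] w] by simp
  moreover have "Phi M (comp M a b) x = z" using z Phi_expand[OF comp_incrementable z(2,3)] by simp
  ultimately show "Phi M a x \<in> X 1 b" "Phi M (comp M a b) x = Phi 1 b (Phi M a x)"
    using expand_in_X[OF incrementable_nonempty[OF b] z(2,3)] Phi_expand[OF b z(2,3)] by simp_all
qed

lemma inv_Phi_comp:
  assumes y: "y \<in> Xstar"
  shows "inv_into (X M (comp M a b)) (Phi M (comp M a b)) y =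
    inv_into (X M a) (Phi M a) (inv_into (X 1 b) (Phi 1 b) y)"
proof -
  have b: "incrementable 1 b" by (rule fundamental_incrementable[OF fwb])
  have y1: "y \<in> Omega 1" "y 0 = 1" using y by (auto simp: Xstar_def)
  show ?thesis
    using inv_Phi_eq_expand[OF comp_incrementable y1] inv_Phi_eq_expand[OF b y1]
      inv_Phi_eq_expand[OF fundamental_incrementable[OF fwa] expand_binary_Xstar[OF b b0 y1]]
      expand_comp_fundamental[OF y1(1)] by simp
qed

lemma inv_Phihat_comp:
  assumes p: "p \<in> Phihat M (comp M a b) ` Dom M (comp M a b)"
  shows "inv_into (Dom M (comp M a b)) (Phihat M (comp M a b)) p =
    inv_into (Dom M a) (Phihat M a) (inv_into (Dom 1 b) (Phihat 1 b) p)"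
proof -
  obtain q where q: "q \<in> Dom M (comp M a b)" "p = Phihat M (comp M a b) q" using p by blast
  have qa: "q \<in> Dom M a" by (rule Dom_comp_imp_Dom[OF q(1)])
  have "inj_on (Phihat 1 b \<circ> Phihat M a) (Dom M (comp M a b))"
  proof (rule comp_inj_on)
    show "inj_on (Phihat M a) (Dom M (comp M a b))"
      using inj_on_Phihat[OF fwa] Dom_comp_imp_Dom by (blast intro: inj_on_subset)
    show "inj_on (Phihat 1 b) (Phihat M a ` Dom M (comp M a b))"
      using inj_on_Phihat[OF fwb] Phihat_comp(1) by (blast intro: inj_on_subset)
  qed
  then have "inj_on (Phihat M (comp M a b)) (Dom M (comp M a b))"
    using inj_on_cong[of "Dom M (comp M a b)"] Phihat_comp(2) by (metis comp_apply)
  then have "inv_into (Dom M (comp M a b)) (Phihat M (comp M a b)) p = q"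
    using q by (simp add: inv_into_f_f)
  also have "\<dots> = inv_into (Dom M a) (Phihat M a) (inv_into (Dom 1 b) (Phihat 1 b) p)"
    using q Phihat_comp[OF q(1)] qa inv_into_f_f[OF inj_on_Phihat[OF fwb]] inv_into_f_f[OF inj_on_Phihat[OF fwa]]
    by simp
  finally show ?thesis .
qed

end

theorem lemma2p10:
  fixes M :: nat and a b :: "nat list"
  assumes "M \<ge> 1" and "a \<in> Fund M" and "b \<in> Fund 1"
  shows "(\<forall>x \<in> X M (comp M a b). Phi M a x \<in> X 1 b \<and>
            Phi M (comp M a b) x = Phi 1 b (Phi M a x))
       \<and> (\<forall>q \<in> Dom M (comp M a b). q \<in> Dom M a \<and> Phihat M a q \<in> Dom 1 b \<and>
            Phihat M (comp M a b) q = Phihat 1 b (Phihat M a q))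
       \<and> (\<forall>y \<in> Xstar. inv_into (X M (comp M a b)) (Phi M (comp M a b)) y =
            inv_into (X M a) (Phi M a) (inv_into (X 1 b) (Phi 1 b) y))
       \<and> (\<forall>p \<in> Phihat M (comp M a b) ` Dom M (comp M a b).
            inv_into (Dom M (comp M a b)) (Phihat M (comp M a b)) p =
            inv_into (Dom M a) (Phihat M a) (inv_into (Dom 1 b) (Phihat 1 b) p))"
proof -
  have fwa: "fundamental M a" by (rule Fund_imp_fundamental[OF assms(1,2)])
  have fwb: "fundamental 1 b" and b0: "b ! 0 = 1" using Fund_one[OF assms(3)] by auto
  show ?thesis
    using Phi_comp[OF fwa fwb b0] Dom_comp_imp_Dom[OF fwa fwb b0] Phihat_comp[OF fwa fwb b0]
      inv_Phi_comp[OF fwa fwb b0] inv_Phihat_comp[OF fwa fwb b0]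
    by blast
qed

end
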